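(* Let $(c_n)_{n\geq1}$ be scalars, put $c_P=\prod_{\pi\in P}c_{\sharp\pi}$ for a set partition $P$, and $k_n=\sum_{P\in\operatorname{SP}(n),\ \operatorname{nc}(P)=I_n}c_P$ where $I_n=\{[n]\}$. Let $\kappa$ be the linear form on $\mathbf{H}^{nc}$ with $\kappa(I_n)=k_n$ for $n\geq1$ and $\kappa=0$ on every other noncrossing multipartition (including $\mathbf{1}$), and let $\phi\in(\mathbf{H}^{nc})^*$ be the solution of $\phi=\varepsilon_N+\kappa\prec\phi$. Let $\gamma$ be the linear form on $\mathbf{H}$ with $\gamma(Q)=c_Q$ if $Q$ is a partition of $[n]$ with $\operatorname{nc}(Q)=I_n$, and $\gamma=0$ on all other partitions and multipartitions. Then the solution $\psi\in\mathbf{H}^*$ of the half-shuffle fixpoint equation $$\psi=\varepsilon_{\mathbf H}+\gamma\prec\psi$$ satisfies $\phi=\psi\circ\operatorname{nc}^*$.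
   Context: $\operatorname{SP}(n)$ is the set of set partitions of $[n]$; $\operatorname{nc}(P)$ is the noncrossing closure (finest noncrossing partition coarser than $P$). A partition is noncrossing if there are no $a<c<b<d$ with $a,b$ in one block and $c,d$ in another. Partitions of finite linearly ordered sets are identified with partitions of $[n]$ via the order-preserving bijection. $\operatorname{Conv}(X)=\{\min X,\dots,\max X\}$; on blocks of $P$ put $\pi\to\rho$ iff $\operatorname{Conv}(\pi)\cap\rho\ne\emptyset$, transitively closed. Upperset $U$: ($\pi\in U,\pi\to\rho$)$\Rightarrow\rho\in U$; lowerset $L$: ($\pi\in L,\sigma\to\pi$)$\Rightarrow\sigma\in L$. A cut $(L,U)$ splits the blocks into a lowerset $L$ and its complement $U$; $L$ is identified with the restriction of $P$ to the union of its blocks; if $x_1<\dots<x_k$ are its elements let $D_0=\{y<x_1\}$, $D_i=\{x_i<y<x_{i+1}\}$, $D_k=\{y>x_k\}$, $U_i=P_{|D_i}$, and $\overline U$ the ordered product of the nonempty $U_i$. $\mathbf{H}$ is the free associative unital algebra on nonempty set partitions, with basis the multipartitions $P_1\cdots P_r$ (viewed as a partition of $[n_1+\dots+n_r]$ by shifting); cuts of multipartitions are tuples of cuts, $L=L_1\cdots L_r$, $\overline U=\overline{U_1}\cdots\overline{U_r}$. For nonempty $P$, $\Delta_\prec(P)=\sum_{\text{cuts},\,1\in L}L\otimes\overline U$ (the element $1$ lies in a block of $L$). The counit $\varepsilon_{\mathbf H}$ is $1$ on $\mathbf{1}$ and $0$ on nonempty multipartitions. For $f,g\in\mathbf{H}^*$,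 $f\prec g$ is the linear form with $(f\prec g)(\mathbf 1)=0$ and $(f\prec g)(x)=(f\otimes g)(\Delta_\prec(x))$ for $x$ in the span of nonempty multipartitions. $\mathbf{H}^{nc}$ is the sub-Hopf algebra spanned by noncrossing multipartitions, with the same structures and counit $\varepsilon_N$. $\operatorname{nc}^*:\mathbf{H}^{nc}\to\mathbf{H}$ is the algebra map with $\operatorname{nc}^*(P)=\sum_{P':\operatorname{nc}(P')=P}P'$ for noncrossing $P$. *)

theory Defs
  imports Main "HOL-Library.Disjoint_Sets"
begin

text \<open>A (nonempty) partition is recorded together with
  its size n as a pair (n, P).  A multipartition P_1 ... P_r is a list of such
  pairs; the empty list is the unit 1 of H.\<close>

type_synonym part = "nat \<times> nat set set"
type_synonym mpart = "part list"

definition is_part :: "part \<Rightarrow> bool" where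
  "is_part NP \<longleftrightarrow> fst NP \<ge> 1 \<and> partition_on {1..fst NP} (snd NP)"

definition is_mpart :: "mpart \<Rightarrow> bool" where
  "is_mpart M \<longleftrightarrow> (\<forall>NP\<in>set M. is_part NP)"

definition noncrossing :: "nat set set \<Rightarrow> bool" where
  "noncrossing P \<longleftrightarrow> \<not> (\<exists>B C a b c d. B \<in> P \<and> C \<in> P \<and> B \<noteq> C \<and>
      a \<in> B \<and> b \<in> B \<and> c \<in> C \<and> d \<in> C \<and> a < c \<and> c < b \<and> b < d)"

definition is_nc_mpart :: "mpart \<Rightarrow> bool" where
  "is_nc_mpart M \<longleftrightarrow> is_mpart M \<and> (\<forall>NP\<in>set M. noncrossing (snd NP))"

definition coarser :: "nat set set \<Rightarrow> nat set set \<Rightarrow> bool" where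
  "coarser Q P \<longleftrightarrow> (\<forall>B\<in>P. \<exists>C\<in>Q. B \<subseteq> C)"

definition nc :: "nat \<Rightarrow> nat set set \<Rightarrow> nat set set" where
  "nc n P = (THE Q. partition_on {1..n} Q \<and> noncrossing Q \<and> coarser Q P \<and>
       (\<forall>Q'. partition_on {1..n} Q' \<and> noncrossing Q' \<and> coarser Q' P \<longrightarrow> coarser Q' Q))"

definition rank :: "nat set \<Rightarrow> nat \<Rightarrow> nat" where
  "rank X x = card {y \<in> X. y \<le> x}"

text \<open>Restriction of P to X, identified with a partition of [card X].\<close>
definition restr :: "nat set set \<Rightarrow> nat set \<Rightarrow> part" where
  "restr P X = (card X, {rank X ` (B \<inter> X) | B. B \<in> P \<and> B \<inter> X \<noteq> {}})"

definition Conv :: "nat set \<Rightarrow> nat set" where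
  "Conv X = {Min X..Max X}"

definition arrow :: "nat set set \<Rightarrow> (nat set \<times> nat set) set" where
  "arrow P = {(\<pi>, \<rho>). \<pi> \<in> P \<and> \<rho> \<in> P \<and> Conv \<pi> \<inter> \<rho> \<noteq> {}}\<^sup>+"

definition is_lowerset :: "nat set set \<Rightarrow> nat set set \<Rightarrow> bool" where
  "is_lowerset P L \<longleftrightarrow> L \<subseteq> P \<and> (\<forall>\<pi>\<in>L. \<forall>\<sigma>\<in>P. (\<sigma>, \<pi>) \<in> arrow P \<longrightarrow> \<sigma> \<in> L)"

definition lowersets :: "nat set set \<Rightarrow> nat set set set" where
  "lowersets P = {L. is_lowerset P L}"

text \<open>The L-part of a cut (empty restriction = unit, omitted).\<close>
definition Lpart1 :: "part \<Rightarrow> nat set set \<Rightarrow> mpart" where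
  "Lpart1 NP L = (if L = {} then [] else [restr (snd NP) (\<Union>L)])"

text \<open>The U-bar part of a cut: with x_1<...<x_k the elements of the union of L,
  D_i is the open interval between consecutive boundaries 0, x_1, ..., x_k, n+1;
  U-bar is the ordered product of the restrictions to the nonempty D_i.\<close>
definition Ubar1 :: "part \<Rightarrow> nat set set \<Rightarrow> mpart" where
  "Ubar1 NP L = (let xs = sorted_list_of_set (\<Union>L);
                     bs = 0 # xs @ [fst NP + 1];
                     Ds = map (\<lambda>i. {bs ! i <..< bs ! (i + 1)}) [0..<length xs + 1]
                 in map (restr (snd NP)) (filter (\<lambda>D. D \<noteq> {}) Ds))"

definition Lpart :: "mpart \<Rightarrow> nat set set list \<Rightarrow> mpart" where
  "Lpart M Ls = concat (map2 Lpart1 M Ls)"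

definition Ubar :: "mpart \<Rightarrow> nat set set list \<Rightarrow> mpart" where
  "Ubar M Ls = concat (map2 Ubar1 M Ls)"

definition cuts1 :: "mpart \<Rightarrow> nat set set list set" where
  "cuts1 M = {Ls \<in> listset (map (\<lambda>NP. lowersets (snd NP)) M). 1 \<in> \<Union>(hd Ls)}"

text \<open>Half-shuffle product of linear forms (given by their values on the basis).\<close>
definition hs :: "(mpart \<Rightarrow> 'a::comm_ring_1) \<Rightarrow> (mpart \<Rightarrow> 'a) \<Rightarrow> mpart \<Rightarrow> 'a" where
  "hs f g M = (if M = [] then 0 else (\<Sum>Ls\<in>cuts1 M. f (Lpart M Ls) * g (Ubar M Ls)))"

definition eps :: "mpart \<Rightarrow> 'a::comm_ring_1" where
  "eps M = (if M = [] then 1 else 0)"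

definition cP :: "(nat \<Rightarrow> 'a::comm_ring_1) \<Rightarrow> nat set set \<Rightarrow> 'a" where
  "cP c P = (\<Prod>\<pi>\<in>P. c (card \<pi>))"

definition kcoef :: "(nat \<Rightarrow> 'a::comm_ring_1) \<Rightarrow> nat \<Rightarrow> 'a" where
  "kcoef c n = (\<Sum>P\<in>{P. partition_on {1..n} P \<and> nc n P = {{1..n}}}. cP c P)"

definition kappa :: "(nat \<Rightarrow> 'a::comm_ring_1) \<Rightarrow> mpart \<Rightarrow> 'a" where
  "kappa c M = (case M of [(n, P)] \<Rightarrow> if P = {{1..n}} then kcoef c n else 0 | _ \<Rightarrow> 0)"

definition gamma :: "(nat \<Rightarrow> 'a::comm_ring_1) \<Rightarrow> mpart \<Rightarrow> 'a" where
  "gamma c M = (case M of [(n, Q)] \<Rightarrow> if nc n Q = {{1..n}} then cP c Q else 0 | _ \<Rightarrow> 0)"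

text \<open>The basis elements occurring in nc^*(M) for a noncrossing multipartition M.\<close>
definition ncpre :: "mpart \<Rightarrow> mpart set" where
  "ncpre M = listset (map (\<lambda>(n, P). (\<lambda>Q. (n, Q)) ` {Q. partition_on {1..n} Q \<and> nc n Q = P}) M)"

end

theory Submission
  imports Defs
begin

text \<open>Both sides are evaluated on a noncrossing multipartition \<open>P \<cdot> M\<close> by peeling off the
  block \<open>p1\<close> of \<open>P\<close> that contains 1, by induction on the total size.

  In \<open>\<phi> = \<epsilon> + \<kappa> \<prec> \<phi>\<close> only the cut with \<open>L = {p1}\<close> survives, because \<open>\<kappa>\<close> vanishes
  off one-block partitions and every other lowerset containing 1 has more than one block; hence \<open>\<phi>(P \<cdot> M) = k\<^bsub>|p1|\<^esub> \<phi>(U \<cdot> M)\<close>, where \<open>U\<close> lists the restrictions of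
  \<open>P\<close> to the gaps of \<open>p1\<close>. Likewise, for each \<open>Q\<close> with \<open>nc(Q) = P\<close> the only cut of
  \<open>\<gamma> \<prec> \<psi>\<close> that survives consists of the blocks of \<open>Q\<close> inside \<open>p1\<close>: a lowerset of \<open>Q\<close>
  whose union has one-block noncrossing closure must have union exactly \<open>p1\<close>. So
  \<open>\<psi>(Q \<cdot> M') = c\<^bsub>Q|p1\<^esub> \<psi>(Q|gaps \<cdot> M')\<close>.

  Finally, the noncrossing closure can be computed separately on \<open>p1\<close> and on each gap,
  since the gaps are intervals and every other block of \<open>P\<close> lies inside a gap. Hence
  \<open>Q \<mapsto> (Q|p1, Q|gaps)\<close> is a bijection from the fibre of \<open>nc\<close> over \<open>P\<close> onto the product of
  the fibre over the one-block partition of \<open>[|p1|]\<close> and the fibre over \<open>U\<close>. Summing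
  \<open>c\<^bsub>Q|p1\<^esub>\<close> over the first factor gives \<open>k\<^bsub>|p1|\<^esub>\<close>, and the induction hypothesis
  applies to \<open>U \<cdot> M\<close>.\<close>

section \<open>Crossings, relabelling and the noncrossing closure\<close>

definition crosses :: "nat set \<Rightarrow> nat set \<Rightarrow> bool" where
  "crosses A B \<longleftrightarrow> (\<exists>a b c d. a \<in> A \<and> b \<in> A \<and> c \<in> B \<and> d \<in> B \<and> a < c \<and> c < b \<and> b < d)"

lemma crossesI:
  "a \<in> A \<Longrightarrow> b \<in> A \<Longrightarrow> c \<in> B \<Longrightarrow> d \<in> B \<Longrightarrow> a < c \<Longrightarrow> c < b \<Longrightarrow> b < d \<Longrightarrow> crosses A B"
  unfolding crosses_def by blast

lemma crossesE:
  assumes "crosses A B"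
  obtains a b c d where "a \<in> A" "b \<in> A" "c \<in> B" "d \<in> B" "a < c" "c < b" "b < d"
  using assms unfolding crosses_def by blast

lemma noncrossing_iff_not_crosses:
  "noncrossing P \<longleftrightarrow> (\<forall>B\<in>P. \<forall>C\<in>P. B \<noteq> C \<longrightarrow> \<not> crosses B C)"
proof -
  have "noncrossing P \<longleftrightarrow> \<not> (\<exists>B C. B \<in> P \<and> C \<in> P \<and> B \<noteq> C \<and> crosses B C)"
    unfolding noncrossing_def crosses_def by simp
  then show ?thesis by blast
qed

lemma crosses_mono: "crosses A B \<Longrightarrow> A \<subseteq> A' \<Longrightarrow> B \<subseteq> B' \<Longrightarrow> crosses A' B'"
  unfolding crosses_def by blast

definition order_convex :: "nat set \<Rightarrow> bool" where
  "order_convex D \<longleftrightarrow> (\<forall>a\<in>D. \<forall>b\<in>D. \<forall>x. a < x \<and> x < b \<longrightarrow> x \<in> D)"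

lemma not_crosses_if_order_convex:
  assumes "A \<subseteq> D" "order_convex D" "B \<inter> D = {}"
  shows "\<not> crosses A B" "\<not> crosses B A"
  using assms unfolding order_convex_def crosses_def by blast+

definition part_image :: "(nat \<Rightarrow> nat) \<Rightarrow> nat set set \<Rightarrow> nat set set" where
  "part_image f P = (`) f ` P"

lemma Union_part_image: "\<Union>(part_image f P) = f ` \<Union>P"
  by (auto simp: part_image_def)

lemma part_image_cong_id:
  assumes "\<And>x. x \<in> \<Union>P \<Longrightarrow> f x = x"
  shows "part_image f P = P"
proof -
  have "f ` B = B" if "B \<in> P" for B
    using assms that by force
  then show ?thesis
    unfolding part_image_def by simp
qed

lemma crosses_image_iff:
  assumes "strict_mono_on S f" "A \<subseteq> S" "B \<subseteq> S"
  shows "crosses (f ` A) (f ` B) \<longleftrightarrow> crosses A B"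
proof -
  have less: "f x < f y \<longleftrightarrow> x < y" if "x \<in> S" "y \<in> S" for x y
    using strict_mono_on_less[OF assms(1) that] .
  show ?thesis
  proof
    assume "crosses (f ` A) (f ` B)"
    then obtain a b c d where "a \<in> A" "b \<in> A" "c \<in> B" "d \<in> B" "f a < f c" "f c < f b" "f b < f d"
      by (elim crossesE imageE) (simp only:)
    with less assms(2,3) show "crosses A B"
      by (intro crossesI[of a A b c B d]) auto
  next
    assume "crosses A B"
    then obtain a b c d where "a \<in> A" "b \<in> A" "c \<in> B" "d \<in> B" "a < c" "c < b" "b < d"
      by (elim crossesE)
    with less assms(2,3) show "crosses (f ` A) (f ` B)"
      by (intro crossesI[of "f a" _ "f b" "f c" _ "f d"]) auto
  qed
qed

lemma noncrossing_part_image_iff: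
  assumes "strict_mono_on S f" "\<Union>P \<subseteq> S"
  shows "noncrossing (part_image f P) \<longleftrightarrow> noncrossing P"
proof -
  have inj: "inj_on f S" using assms(1) strict_mono_on_imp_inj_on by blast
  have sub: "B \<subseteq> S" if "B \<in> P" for B using assms(2) that by blast
  have eq: "f ` B = f ` C \<longleftrightarrow> B = C" if "B \<in> P" "C \<in> P" for B C
    by (rule inj_on_image_eq_iff[OF inj]) (use sub that in blast)+
  have cr: "crosses (f ` B) (f ` C) \<longleftrightarrow> crosses B C" if "B \<in> P" "C \<in> P" for B C
    using crosses_image_iff[OF assms(1) sub sub] that .
  show ?thesis
    unfolding noncrossing_iff_not_crosses part_image_def using eq cr by auto
qed

lemma coarser_part_image_iff:
  assumes "inj_on f S" "\<Union>P \<subseteq> S" "\<Union>Q \<subseteq> S"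
  shows "coarser (part_image f P) (part_image f Q) \<longleftrightarrow> coarser P Q"
proof -
  have sub: "f ` B \<subseteq> f ` C \<longleftrightarrow> B \<subseteq> C" if "B \<in> Q" "C \<in> P" for B C
  proof -
    have "B \<subseteq> S" "C \<subseteq> S" using assms(2,3) that by blast+
    then show ?thesis using inj_on_image_mem_iff[OF assms(1)] by (auto simp: image_subset_iff subset_eq)
  qed
  show ?thesis
    unfolding coarser_def part_image_def using sub by auto
qed

lemma partition_on_part_image:
  assumes "inj_on f S" "partition_on S P"
  shows "partition_on (f ` S) (part_image f P)"
proof -
  have "partition_on (f ` S) ((`) f ` P - {{}})" by (rule partition_on_inj_image[OF assms(2,1)])
  moreover have "(`) f ` P - {{}} = (`) f ` P" using assms(2) by (auto simp: partition_on_def)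
  ultimately show ?thesis by (simp add: part_image_def)
qed

lemma part_image_inverse:
  assumes "\<And>x. x \<in> S \<Longrightarrow> g (f x) = x" "\<Union>P \<subseteq> S"
  shows "part_image g (part_image f P) = P"
proof -
  have "g ` f ` B = B" if "B \<in> P" for B
    using assms that by (force simp: image_image)
  then show ?thesis unfolding part_image_def by (simp add: image_image)
qed

definition is_nc_closure :: "nat set \<Rightarrow> nat set set \<Rightarrow> nat set set \<Rightarrow> bool" where
  "is_nc_closure A Q P \<longleftrightarrow> partition_on A P \<and> noncrossing P \<and> coarser P Q \<and>
     (\<forall>R. partition_on A R \<and> noncrossing R \<and> coarser R Q \<longrightarrow> coarser R P)"

lemma partition_same_block:
  assumes "partition_on A R" "C \<in> R" "C' \<in> R" "x \<in> C" "x \<in> C'"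
  shows "C = C'"
  using partition_onD2[OF assms(1)] assms(2-5) unfolding disjoint_def by blast

lemma partition_on_obtain_block:
  assumes "partition_on A R" "x \<in> A"
  obtains C where "C \<in> R" "x \<in> C"
  using partition_onD1[OF assms(1)] assms(2) by blast

lemma partition_on_block_subset:
  assumes "partition_on A R" "C \<in> R"
  shows "C \<subseteq> A"
  using partition_onD1[OF assms(1)] assms(2) by blast

lemma partition_on_block_nonempty:
  assumes "partition_on A R" "C \<in> R"
  obtains x where "x \<in> C"
  using partition_onD3[OF assms(1)] assms(2) by (metis ex_in_conv)

lemma coarser_antisym:
  assumes "partition_on A P" "partition_on A R" "coarser P R" "coarser R P"
  shows "P = R"
  using refines_asym[of A R P] assms unfolding refines_def coarser_def by blast

lemma coarser_trans:
  assumes "coarser A B" "coarser B C"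
  shows "coarser A C"
  using assms unfolding coarser_def by (meson order_trans)

lemma is_nc_closure_unique: "is_nc_closure A Q P \<Longrightarrow> is_nc_closure A Q P' \<Longrightarrow> P = P'"
  unfolding is_nc_closure_def using coarser_antisym by metis

text \<open>Two points lie in the same block of the noncrossing closure iff they lie in the same
  block of every noncrossing coarsening.\<close>

definition nc_closure_rel :: "nat set \<Rightarrow> nat set set \<Rightarrow> nat rel" where
  "nc_closure_rel A Q = {(x, y). x \<in> A \<and> y \<in> A \<and>
     (\<forall>R. partition_on A R \<and> noncrossing R \<and> coarser R Q \<longrightarrow> (\<exists>C\<in>R. x \<in> C \<and> y \<in> C))}"

lemma nc_closure_relD:
  assumes "(x, y) \<in> nc_closure_rel A Q" "partition_on A R" "noncrossing R" "coarser R Q"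
  obtains C where "C \<in> R" "x \<in> C" "y \<in> C"
  using assms unfolding nc_closure_rel_def by blast

lemma nc_closure_relI:
  assumes "x \<in> A" "y \<in> A"
    and "\<And>R. partition_on A R \<Longrightarrow> noncrossing R \<Longrightarrow> coarser R Q \<Longrightarrow> \<exists>C\<in>R. x \<in> C \<and> y \<in> C"
  shows "(x, y) \<in> nc_closure_rel A Q"
  using assms by (simp add: nc_closure_rel_def)

lemma equiv_nc_closure_rel: "equiv A (nc_closure_rel A Q)"
proof (rule equivI)
  let ?r = "nc_closure_rel A Q"
  show "?r \<subseteq> A \<times> A" unfolding nc_closure_rel_def by blast
  show "refl_on A ?r" unfolding refl_on_def
  proof (intro conjI ballI)
    fix x assume x: "x \<in> A"
    have "\<exists>C\<in>R. x \<in> C" if "partition_on A R" for R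
      using partition_on_obtain_block[OF that x] by blast
    then show "(x, x) \<in> ?r" unfolding nc_closure_rel_def using x by blast
  qed
  show "sym ?r" unfolding sym_def nc_closure_rel_def by blast
  show "trans ?r" unfolding trans_def
  proof (intro allI impI)
    fix x y z assume xy: "(x, y) \<in> ?r" and yz: "(y, z) \<in> ?r"
    have "\<exists>C\<in>R. x \<in> C \<and> z \<in> C" if R: "partition_on A R" "noncrossing R" "coarser R Q" for R
    proof -
      obtain C where C: "C \<in> R" "x \<in> C" "y \<in> C" using xy R by (rule nc_closure_relD)
      obtain C' where C': "C' \<in> R" "y \<in> C'" "z \<in> C'" using yz R by (rule nc_closure_relD)
      have "C = C'" using partition_same_block[OF R(1) C(1) C'(1)] C C' by blast
      then show ?thesis using C C' by blast
    qed
    then show "(x, z) \<in> ?r" using xy yz unfolding nc_closure_rel_def by blast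
  qed
qed

lemma noncrossing_quotient_nc_closure_rel: "noncrossing (A // nc_closure_rel A Q)"
  unfolding noncrossing_iff_not_crosses
proof (intro ballI impI notI)
  let ?r = "nc_closure_rel A Q"
  fix B C assume BC: "B \<in> A // ?r" "C \<in> A // ?r" "B \<noteq> C" "crosses B C"
  then obtain a b c d where abcd: "a \<in> B" "b \<in> B" "c \<in> C" "d \<in> C" "a < c" "c < b" "b < d"
    by (elim crossesE)
  have ab: "(a, b) \<in> ?r" and cd: "(c, d) \<in> ?r"
    using in_quotient_imp_in_rel[OF equiv_nc_closure_rel] BC abcd by blast+
  have "\<exists>D\<in>R. a \<in> D \<and> c \<in> D" if R: "partition_on A R" "noncrossing R" "coarser R Q" for R
  proof -
    obtain D1 where D1: "D1 \<in> R" "a \<in> D1" "b \<in> D1" using ab R by (rule nc_closure_relD)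
    obtain D2 where D2: "D2 \<in> R" "c \<in> D2" "d \<in> D2" using cd R by (rule nc_closure_relD)
    have "crosses D1 D2" using D1 D2 abcd by (intro crossesI[of a D1 b c D2 d])
    then have "D1 = D2" using R(2) D1(1) D2(1) unfolding noncrossing_iff_not_crosses by blast
    then show ?thesis using D1 D2 by blast
  qed
  moreover have "a \<in> A" "c \<in> A" using ab cd unfolding nc_closure_rel_def by blast+
  ultimately have "(a, c) \<in> ?r" unfolding nc_closure_rel_def by blast
  then have "B = C" using quotient_eqI[OF equiv_nc_closure_rel BC(1,2) abcd(1,3)] by blast
  with \<open>B \<noteq> C\<close> show False by simp
qed

lemma coarser_quotient_nc_closure_rel:
  assumes "partition_on A Q"
  shows "coarser (A // nc_closure_rel A Q) Q"
  unfolding coarser_def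
proof
  let ?r = "nc_closure_rel A Q"
  fix B assume B: "B \<in> Q"
  then obtain x where x: "x \<in> B" using partition_on_block_nonempty[OF assms] by blast
  have "B \<subseteq> A" using partition_on_block_subset[OF assms B] .
  have "(x, y) \<in> ?r" if y: "y \<in> B" for y
  proof -
    have "\<exists>C\<in>R. x \<in> C \<and> y \<in> C" if R: "coarser R Q" for R
    proof -
      obtain C where "C \<in> R" "B \<subseteq> C" using R B unfolding coarser_def by blast
      then show ?thesis using x y by blast
    qed
    then show ?thesis using \<open>B \<subseteq> A\<close> x y by (intro nc_closure_relI) auto
  qed
  then have "B \<subseteq> ?r `` {x}" by blast
  moreover have "?r `` {x} \<in> A // ?r" using \<open>B \<subseteq> A\<close> x by (intro quotientI) blast
  ultimately show "\<exists>C\<in>A // ?r. B \<subseteq> C" by blast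
qed

lemma coarser_nc_closure_quotient:
  assumes R: "partition_on A R" "noncrossing R" "coarser R Q"
  shows "coarser R (A // nc_closure_rel A Q)"
  unfolding coarser_def
proof
  let ?r = "nc_closure_rel A Q"
  fix B assume B: "B \<in> A // ?r"
  then obtain x where x: "x \<in> A" "B = ?r `` {x}" by (elim quotientE)
  then obtain C where C: "C \<in> R" "x \<in> C" using partition_on_obtain_block[OF R(1)] by blast
  have "y \<in> C" if "y \<in> B" for y
  proof -
    have "(x, y) \<in> ?r" using that x by blast
    then obtain C' where C': "C' \<in> R" "x \<in> C'" "y \<in> C'" using R by (rule nc_closure_relD)
    then show ?thesis using partition_same_block[OF R(1) C'(1) C(1) C'(2) C(2)] by blast
  qed
  then show "\<exists>C\<in>R. B \<subseteq> C" using C by blast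
qed

lemma is_nc_closure_exists:
  assumes "partition_on A Q"
  shows "\<exists>P. is_nc_closure A Q P"
proof -
  have "is_nc_closure A Q (A // nc_closure_rel A Q)"
    unfolding is_nc_closure_def
    using partition_on_quotient[OF equiv_nc_closure_rel] noncrossing_quotient_nc_closure_rel
      coarser_quotient_nc_closure_rel[OF assms] coarser_nc_closure_quotient by blast
  then show ?thesis by blast
qed

lemma nc_eq_iff:
  assumes "partition_on {1..n} Q"
  shows "nc n Q = P \<longleftrightarrow> is_nc_closure {1..n} Q P"
proof -
  obtain P0 where P0: "is_nc_closure {1..n} Q P0" using is_nc_closure_exists[OF assms] by blast
  have "nc n Q = (THE P. is_nc_closure {1..n} Q P)" by (simp add: nc_def is_nc_closure_def)
  also have "\<dots> = P0"
    by (rule the_equality) (use P0 is_nc_closure_unique in auto)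
  finally show ?thesis using P0 is_nc_closure_unique by blast
qed

lemma strict_mono_on_rank: "finite S \<Longrightarrow> strict_mono_on S (rank S)"
proof (rule strict_mono_onI)
  fix x y assume "finite S" "x \<in> S" "y \<in> S" "x < y"
  then have "{z \<in> S. z \<le> x} \<subseteq> {z \<in> S. z \<le> y}" "y \<in> {z \<in> S. z \<le> y}" "y \<notin> {z \<in> S. z \<le> x}" by auto
  then have "{z \<in> S. z \<le> x} \<subset> {z \<in> S. z \<le> y}" by blast
  then show "rank S x < rank S y" unfolding rank_def using \<open>finite S\<close> by (simp add: psubset_card_mono)
qed

lemma rank_image:
  assumes "finite S"
  shows "rank S ` S = {1..card S}"
proof -
  have inj: "inj_on (rank S) S" using strict_mono_on_rank[OF assms] strict_mono_on_imp_inj_on by blast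
  have sub: "rank S ` S \<subseteq> {1..card S}"
  proof
    fix k assume "k \<in> rank S ` S"
    then obtain x where "x \<in> S" "k = rank S x" by blast
    then have "x \<in> {z \<in> S. z \<le> x}" by simp
    moreover have "finite {z \<in> S. z \<le> x}" using assms by simp
    ultimately have "card {z \<in> S. z \<le> x} > 0" using card_gt_0_iff by blast
    then have "1 \<le> k" using \<open>k = rank S x\<close> unfolding rank_def by simp
    moreover have "k \<le> card S"
    proof -
      have "{z \<in> S. z \<le> x} \<subseteq> S" by blast
      then show ?thesis using card_mono[OF assms] \<open>k = rank S x\<close> unfolding rank_def by blast
    qed
    ultimately show "k \<in> {1..card S}" by simp
  qed
  have "card (rank S ` S) = card S" using card_image[OF inj] .
  then show ?thesis using sub by (intro card_subset_eq) auto
qed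

lemma inj_on_rank: "finite S \<Longrightarrow> inj_on (rank S) S"
  by (rule strict_mono_on_imp_inj_on[OF strict_mono_on_rank])

lemma bij_betw_rank: "finite S \<Longrightarrow> bij_betw (rank S) S {1..card S}"
  unfolding bij_betw_def using rank_image[of S] inj_on_rank[of S] by simp

definition unrank :: "nat set \<Rightarrow> nat \<Rightarrow> nat" where
  "unrank S = the_inv_into S (rank S)"

lemma unrank_bij: "finite S \<Longrightarrow> bij_betw (unrank S) {1..card S} S"
  unfolding unrank_def by (rule bij_betw_the_inv_into[OF bij_betw_rank])

lemma unrank_rank: "finite S \<Longrightarrow> x \<in> S \<Longrightarrow> unrank S (rank S x) = x"
  unfolding unrank_def by (rule the_inv_into_f_f[OF inj_on_rank])

lemma rank_unrank: "finite S \<Longrightarrow> k \<in> {1..card S} \<Longrightarrow> rank S (unrank S k) = k"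
  unfolding unrank_def by (rule f_the_inv_into_f_bij_betw[OF bij_betw_rank])

lemma unrank_image: "finite S \<Longrightarrow> unrank S ` {1..card S} = S"
  by (rule bij_betw_imp_surj_on[OF unrank_bij])

lemma rank_atLeastAtMost: "x \<in> {1..n} \<Longrightarrow> rank {1..n} x = x"
proof -
  assume "x \<in> {1..n}"
  then have "{y \<in> {1..n}. y \<le> x} = {1..x}" by auto
  then show ?thesis unfolding rank_def by simp
qed

lemma part_image_rank_singleton: "finite X \<Longrightarrow> part_image (rank X) {X} = {{1..card X}}"
  unfolding part_image_def using rank_image by simp

definition trace :: "nat set set \<Rightarrow> nat set \<Rightarrow> nat set set" where
  "trace P S = (\<lambda>B. B \<inter> S) ` {B \<in> P. B \<inter> S \<noteq> {}}"

lemma restr_eq_trace: "restr P X = (card X, part_image (rank X) (trace P X))"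
  unfolding restr_def part_image_def trace_def image_image setcompr_eq_image by simp

lemma fst_restr [simp]: "fst (restr P X) = card X"
  by (simp add: restr_def)

lemma traceI: "B \<in> P \<Longrightarrow> B \<inter> S \<noteq> {} \<Longrightarrow> B \<inter> S \<in> trace P S"
  unfolding trace_def by (rule imageI) simp

lemma traceE:
  assumes "B' \<in> trace P S"
  obtains B where "B \<in> P" "B \<inter> S \<noteq> {}" "B' = B \<inter> S"
proof -
  obtain B where "B \<in> {B \<in> P. B \<inter> S \<noteq> {}}" "B' = B \<inter> S" using assms unfolding trace_def by (elim imageE)
  then show ?thesis using that by blast
qed

lemma trace_memI_subset: "B \<in> P \<Longrightarrow> B \<subseteq> S \<Longrightarrow> B \<noteq> {} \<Longrightarrow> B \<in> trace P S"
  using traceI[of B P S] by (simp add: Int_absorb2)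

lemma trace_eq_image_Int: "trace P S = (\<inter>) S ` P - {{}}"
proof
  show "trace P S \<subseteq> (\<inter>) S ` P - {{}}"
  proof
    fix B' assume "B' \<in> trace P S"
    then obtain B where B: "B \<in> P" "B \<inter> S \<noteq> {}" "B' = B \<inter> S" by (elim traceE)
    then have "B' = S \<inter> B" by blast
    then show "B' \<in> (\<inter>) S ` P - {{}}" using B by blast
  qed
  show "(\<inter>) S ` P - {{}} \<subseteq> trace P S"
  proof
    fix B' assume "B' \<in> (\<inter>) S ` P - {{}}"
    then obtain B where B: "B \<in> P" "B' = S \<inter> B" "B' \<noteq> {}" by blast
    then have "B' = B \<inter> S" "B \<inter> S \<noteq> {}" by blast+
    then show "B' \<in> trace P S" using traceI[OF B(1)] by simp
  qed
qed

lemma partition_on_trace: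
  assumes "partition_on A P" "S \<subseteq> A"
  shows "partition_on S (trace P S)"
proof -
  have "partition_on (S \<inter> A) ((\<inter>) S ` P - {{}})" by (rule partition_on_restrict[OF assms(1)])
  moreover have "S \<inter> A = S" using assms(2) by blast
  ultimately show ?thesis by (simp add: trace_eq_image_Int)
qed

lemma noncrossing_trace:
  assumes "noncrossing P"
  shows "noncrossing (trace P S)"
  unfolding noncrossing_iff_not_crosses
proof (intro ballI impI notI)
  fix B' C' assume h: "B' \<in> trace P S" "C' \<in> trace P S" "B' \<noteq> C'" "crosses B' C'"
  obtain B where B: "B \<in> P" "B' = B \<inter> S" using h(1) by (elim traceE) simp
  obtain C where C: "C \<in> P" "C' = C \<inter> S" using h(2) by (elim traceE) simp
  have BC: "B \<in> P" "C \<in> P" "B' = B \<inter> S" "C' = C \<inter> S" using B C by simp_all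
  then have "B \<noteq> C" using h(3) by blast
  moreover have "crosses B C" using crosses_mono[OF h(4)] BC by blast
  ultimately show False using assms BC unfolding noncrossing_iff_not_crosses by blast
qed

lemma coarser_trace:
  assumes "coarser P Q"
  shows "coarser (trace P S) (trace Q S)"
  unfolding coarser_def
proof
  fix C' assume "C' \<in> trace Q S"
  then obtain C where C: "C \<in> Q" "C \<inter> S \<noteq> {}" "C' = C \<inter> S" by (elim traceE)
  then obtain B where B: "B \<in> P" "C \<subseteq> B" using assms unfolding coarser_def by blast
  then have "C' \<subseteq> B \<inter> S" "B \<inter> S \<noteq> {}" using C by blast+
  moreover have "B \<inter> S \<in> trace P S" using B(1) calculation(2) by (rule traceI)
  ultimately show "\<exists>B'\<in>trace P S. C' \<subseteq> B'" by blast
qed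

lemma trace_saturated:
  assumes "\<And>B. B \<in> P \<Longrightarrow> B \<subseteq> S \<or> B \<inter> S = {}" "{} \<notin> P"
  shows "trace P S = {B \<in> P. B \<subseteq> S}"
proof
  show "trace P S \<subseteq> {B \<in> P. B \<subseteq> S}"
  proof
    fix B' assume "B' \<in> trace P S"
    then obtain B where "B \<in> P" "B \<inter> S \<noteq> {}" "B' = B \<inter> S" by (elim traceE)
    then have "B \<subseteq> S" using assms(1)[of B] by blast
    then have "B' = B" using \<open>B' = B \<inter> S\<close> by blast
    then show "B' \<in> {B \<in> P. B \<subseteq> S}" using \<open>B \<in> P\<close> \<open>B \<subseteq> S\<close> by simp
  qed
  show "{B \<in> P. B \<subseteq> S} \<subseteq> trace P S"
  proof
    fix B assume "B \<in> {B \<in> P. B \<subseteq> S}"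
    then have "B \<in> P" "B \<subseteq> S" "B \<noteq> {}" using assms(2) by auto
    then have "B \<inter> S = B" "B \<inter> S \<noteq> {}" by auto
    then have "B \<inter> S \<in> trace P S" using \<open>B \<in> P\<close> traceI by blast
    then show "B \<in> trace P S" using \<open>B \<inter> S = B\<close> by simp
  qed
qed

lemma trace_carrier:
  assumes "partition_on A P"
  shows "trace P A = P"
proof -
  have "trace P A = {B \<in> P. B \<subseteq> A}"
    by (rule trace_saturated) (use partition_on_block_subset[OF assms] partition_onD3[OF assms] in auto)
  also have "\<dots> = P" using partition_on_block_subset[OF assms] by blast
  finally show ?thesis .
qed

lemma strict_mono_on_the_inv_into:
  fixes f :: "'a::linorder \<Rightarrow> 'b::linorder"
  assumes "strict_mono_on S f"
  shows "strict_mono_on (f ` S) (the_inv_into S f)"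
proof (rule strict_mono_onI)
  have inj: "inj_on f S" using assms strict_mono_on_imp_inj_on by blast
  fix y1 y2 assume "y1 \<in> f ` S" "y2 \<in> f ` S" "y1 < y2"
  then obtain x1 x2 where x: "x1 \<in> S" "x2 \<in> S" "y1 = f x1" "y2 = f x2" by blast
  then have "x1 < x2" using \<open>y1 < y2\<close> strict_mono_on_less[OF assms x(1,2)] by simp
  then show "the_inv_into S f y1 < the_inv_into S f y2"
    using x the_inv_into_f_f[OF inj] by simp
qed

lemma is_nc_closure_image:
  assumes f: "strict_mono_on S f" and cl: "is_nc_closure S Q P" and Q: "partition_on S Q"
  shows "is_nc_closure (f ` S) (part_image f Q) (part_image f P)"
proof -
  define g where "g = the_inv_into S f"
  have inj: "inj_on f S" using f strict_mono_on_imp_inj_on by blast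
  have gf: "g (f x) = x" if "x \<in> S" for x unfolding g_def using the_inv_into_f_f[OF inj that] .
  have fg: "f (g y) = y" if "y \<in> f ` S" for y unfolding g_def using f_the_inv_into_f[OF inj that] .
  have gS: "g ` f ` S = S" using gf by force
  have gmono: "strict_mono_on (f ` S) g" unfolding g_def by (rule strict_mono_on_the_inv_into[OF f])
  have ginj: "inj_on g (f ` S)" using gmono strict_mono_on_imp_inj_on by blast
  have P: "partition_on S P" "noncrossing P" "coarser P Q"
    and least: "\<And>R. partition_on S R \<Longrightarrow> noncrossing R \<Longrightarrow> coarser R Q \<Longrightarrow> coarser R P"
    using cl unfolding is_nc_closure_def by blast+
  have UP: "\<Union>P \<subseteq> S" using P(1) partition_onD1 by blast
  have UQ: "\<Union>Q \<subseteq> S" using Q partition_onD1 by blast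
  have "partition_on (f ` S) (part_image f P)" by (rule partition_on_part_image[OF inj P(1)])
  moreover have "noncrossing (part_image f P)" using noncrossing_part_image_iff[OF f UP] P(2) by simp
  moreover have "coarser (part_image f P) (part_image f Q)" using coarser_part_image_iff[OF inj UP UQ] P(3) by simp
  moreover have "coarser R (part_image f P)"
    if R: "partition_on (f ` S) R" "noncrossing R" "coarser R (part_image f Q)" for R
  proof -
    have UR: "\<Union>R \<subseteq> f ` S" using R(1) partition_onD1 by blast
    have UgR: "\<Union>(part_image g R) \<subseteq> S" using UR gS unfolding Union_part_image by blast
    have RR: "part_image f (part_image g R) = R" by (rule part_image_inverse[where S = "f ` S" and g = f and f = g, OF fg UR])
    have QQ: "part_image g (part_image f Q) = Q" by (rule part_image_inverse[where S = S and g = g and f = f, OF gf UQ])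
    have UfQ: "\<Union>(part_image f Q) \<subseteq> f ` S" using UQ unfolding Union_part_image by blast
    have "partition_on S (part_image g R)" using partition_on_part_image[OF ginj R(1)] gS by simp
    moreover have "noncrossing (part_image g R)" using noncrossing_part_image_iff[OF gmono UR] R(2) by simp
    moreover have "coarser (part_image g R) Q"
      using coarser_part_image_iff[OF ginj UR UfQ] R(3) QQ by simp
    ultimately have "coarser (part_image g R) P" using least by blast
    then have "coarser (part_image f (part_image g R)) (part_image f P)"
      using coarser_part_image_iff[OF inj UgR UP] by simp
    then show ?thesis using RR by simp
  qed
  ultimately show ?thesis unfolding is_nc_closure_def by blast
qed

lemma is_nc_closure_image_iff:
  assumes f: "strict_mono_on S f" and Q: "partition_on S Q" and UP: "\<Union>P \<subseteq> S"
  shows "is_nc_closure (f ` S) (part_image f Q) (part_image f P) \<longleftrightarrow> is_nc_closure S Q P"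
proof
  assume cl: "is_nc_closure (f ` S) (part_image f Q) (part_image f P)"
  define g where "g = the_inv_into S f"
  have inj: "inj_on f S" using f strict_mono_on_imp_inj_on by blast
  have gf: "g (f x) = x" if "x \<in> S" for x unfolding g_def using the_inv_into_f_f[OF inj that] .
  have gS: "g ` f ` S = S" using gf by force
  have gmono: "strict_mono_on (f ` S) g" unfolding g_def by (rule strict_mono_on_the_inv_into[OF f])
  have UQ: "\<Union>Q \<subseteq> S" using Q partition_onD1 by blast
  have "is_nc_closure (g ` f ` S) (part_image g (part_image f Q)) (part_image g (part_image f P))"
    by (rule is_nc_closure_image[OF gmono cl partition_on_part_image[OF inj Q]])
  then show "is_nc_closure S Q P"
    using gS part_image_inverse[where S = S and g = g and f = f, OF gf UQ] part_image_inverse[where S = S and g = g and f = f, OF gf UP] by simp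
qed (rule is_nc_closure_image[OF f _ Q])

lemma nc_rank_image_iff:
  assumes "finite S" "partition_on S Q" "\<Union>P \<subseteq> S"
  shows "nc (card S) (part_image (rank S) Q) = part_image (rank S) P \<longleftrightarrow> is_nc_closure S Q P"
proof -
  have inj: "inj_on (rank S) S" using strict_mono_on_rank[OF assms(1)] strict_mono_on_imp_inj_on by blast
  have "partition_on (rank S ` S) (part_image (rank S) Q)" by (rule partition_on_part_image[OF inj assms(2)])
  then have p: "partition_on {1..card S} (part_image (rank S) Q)" using rank_image[OF assms(1)] by simp
  show ?thesis
    using nc_eq_iff[OF p] is_nc_closure_image_iff[OF strict_mono_on_rank[OF assms(1)] assms(2,3)] rank_image[OF assms(1)] by simp
qed

section \<open>Gaps of a set\<close>

definition gaps :: "nat \<Rightarrow> nat set \<Rightarrow> nat set list" where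
  "gaps n X = (let xs = sorted_list_of_set X;
                 bs = 0 # xs @ [n + 1];
                 Ds = map (\<lambda>i. {bs ! i <..< bs ! (i + 1)}) [0..<length xs + 1]
             in filter (\<lambda>D. D \<noteq> {}) Ds)"

lemma Ubar1_eq_gaps: "Ubar1 NP L = map (restr (snd NP)) (gaps (fst NP) (\<Union>L))"
  unfolding Ubar1_def gaps_def Let_def by simp

definition gap_bounds :: "nat \<Rightarrow> nat set \<Rightarrow> nat list" where
  "gap_bounds n X = 0 # sorted_list_of_set X @ [n + 1]"

definition all_gaps :: "nat \<Rightarrow> nat set \<Rightarrow> nat set list" where
  "all_gaps n X = map (\<lambda>i. {gap_bounds n X ! i <..< gap_bounds n X ! Suc i}) [0..<card X + 1]"

lemma gaps_eq_filter_all_gaps: "finite X \<Longrightarrow> gaps n X = filter (\<lambda>D. D \<noteq> {}) (all_gaps n X)"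
  unfolding gaps_def all_gaps_def gap_bounds_def Let_def by simp

lemma sorted_wrt_less_nth_less_iff:
  assumes "sorted_wrt (<) (xs :: nat list)" "i < length xs" "j < length xs"
  shows "xs ! i < xs ! j \<longleftrightarrow> i < j"
proof
  assume h: "xs ! i < xs ! j"
  show "i < j"
  proof (rule ccontr)
    assume "\<not> i < j"
    then have "j < i \<or> j = i" by auto
    then show False
    proof
      assume "j < i"
      then have "xs ! j < xs ! i" using sorted_wrt_nth_less[OF assms(1) _ assms(2)] by blast
      then show False using h by simp
    qed (use h in simp)
  qed
next
  assume "i < j"
  then show "xs ! i < xs ! j" using sorted_wrt_nth_less[OF assms(1) _ assms(3)] by blast
qed

lemma sorted_wrt_less_straddle:
  fixes xs :: "nat list"
  assumes "sorted_wrt (<) xs" "xs \<noteq> []" "xs ! 0 < y" "y < last xs" "y \<notin> set xs"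
  shows "\<exists>i. Suc i < length xs \<and> xs ! i < y \<and> y < xs ! Suc i"
  using assms
proof (induction xs)
  case Nil
  then show ?case by simp
next
  case (Cons x xs)
  show ?case
  proof (cases xs)
    case Nil
    then show ?thesis using Cons.prems by simp
  next
    case (Cons z zs)
    show ?thesis
    proof (cases "y < z")
      case True
      then show ?thesis using Cons Cons.prems(3) by auto
    next
      case False
      then have "z < y" using Cons.prems(5) Cons by auto
      have "sorted_wrt (<) xs" using Cons.prems(1) by simp
      moreover have "xs ! 0 < y" using \<open>z < y\<close> Cons by simp
      moreover have "y < last xs" using Cons.prems(4) Cons by simp
      moreover have "y \<notin> set xs" using Cons.prems(5) by simp
      ultimately obtain i where "Suc i < length xs" "xs ! i < y" "y < xs ! Suc i"
        using Cons.IH Cons by blast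
      then show ?thesis by (intro exI[of _ "Suc i"]) simp
    qed
  qed
qed

context
  fixes n :: nat and X :: "nat set"
  assumes X: "X \<subseteq> {1..n}"
begin

lemma finite_X: "finite X"
  using X finite_subset by blast

lemma sorted_gap_bounds: "sorted_wrt (<) (gap_bounds n X)"
proof -
  have s: "sorted_wrt (<) (sorted_list_of_set X)" by (rule strict_sorted_list_of_set)
  have set: "set (sorted_list_of_set X) = X" using finite_X by simp
  show ?thesis unfolding gap_bounds_def using s set X by (auto simp: sorted_wrt_append)
qed

lemma length_gap_bounds: "length (gap_bounds n X) = card X + 2"
  unfolding gap_bounds_def using finite_X by simp

lemma set_gap_bounds: "set (gap_bounds n X) = insert 0 (insert (n + 1) X)"
  unfolding gap_bounds_def using finite_X by auto

lemma gap_bounds_first: "gap_bounds n X ! 0 = 0"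
  unfolding gap_bounds_def by simp

lemma gap_bounds_inner: "i < card X \<Longrightarrow> gap_bounds n X ! Suc i \<in> X"
proof -
  assume "i < card X"
  then have "gap_bounds n X ! Suc i = sorted_list_of_set X ! i" unfolding gap_bounds_def using finite_X by (simp add: nth_append)
  moreover have "i < length (sorted_list_of_set X)" using \<open>i < card X\<close> by simp
  then have "sorted_list_of_set X ! i \<in> set (sorted_list_of_set X)" by (rule nth_mem)
  ultimately show ?thesis using finite_X by simp
qed

lemma gap_bounds_le: "i < length (gap_bounds n X) \<Longrightarrow> gap_bounds n X ! i \<le> n + 1"
proof -
  assume "i < length (gap_bounds n X)"
  then have "gap_bounds n X ! i \<in> set (gap_bounds n X)" by simp
  then show ?thesis using set_gap_bounds X by auto
qed

lemma nth_all_gaps: "i < card X + 1 \<Longrightarrow> all_gaps n X ! i = {gap_bounds n X ! i <..< gap_bounds n X ! Suc i}"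
  unfolding all_gaps_def by (simp del: upt_Suc)

lemma length_all_gaps: "length (all_gaps n X) = card X + 1"
  unfolding all_gaps_def by simp

lemma all_gapsD:
  assumes "D \<in> set (all_gaps n X)"
  shows "D \<subseteq> {1..n}" "D \<inter> X = {}" "order_convex D"
proof -
  obtain i where i: "i < card X + 1" "D = all_gaps n X ! i" using assms length_all_gaps by (metis in_set_conv_nth)
  then have D: "D = {gap_bounds n X ! i <..< gap_bounds n X ! Suc i}" using nth_all_gaps by simp
  have le: "gap_bounds n X ! Suc i \<le> n + 1" using gap_bounds_le length_gap_bounds i by simp
  show "D \<subseteq> {1..n}" using D le by auto
  show "order_convex D" unfolding order_convex_def D by auto
  show "D \<inter> X = {}"
  proof (rule ccontr)
    assume "D \<inter> X \<noteq> {}"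
    then obtain x where x: "x \<in> D" "x \<in> X" by blast
    then have "x \<in> set (gap_bounds n X)" using set_gap_bounds by simp
    then obtain k where k: "k < length (gap_bounds n X)" "gap_bounds n X ! k = x" by (metis in_set_conv_nth)
    have "gap_bounds n X ! i < gap_bounds n X ! k" "gap_bounds n X ! k < gap_bounds n X ! Suc i" using x(1) D k by auto
    then have "i < k" "k < Suc i"
      using sorted_wrt_less_nth_less_iff[OF sorted_gap_bounds] k(1) length_gap_bounds i by auto
    then show False by simp
  qed
qed

definition lies_before :: "nat set \<Rightarrow> nat set \<Rightarrow> bool" where
  "lies_before A B \<longleftrightarrow> (\<forall>a\<in>A. \<forall>b\<in>B. \<exists>x\<in>X. a < x \<and> x < b)"

lemma sorted_all_gaps: "sorted_wrt lies_before (all_gaps n X)"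
  unfolding sorted_wrt_iff_nth_less lies_before_def
proof (intro allI impI ballI)
  fix i j a b assume ij: "i < j" "j < length (all_gaps n X)" and a: "a \<in> all_gaps n X ! i" and b: "b \<in> all_gaps n X ! j"
  have jl: "j < card X + 1" using ij length_all_gaps by simp
  have a': "a < gap_bounds n X ! Suc i" using a nth_all_gaps[of i] ij jl by simp
  have b': "gap_bounds n X ! j < b" using b nth_all_gaps[of j] jl by simp
  have "gap_bounds n X ! Suc i \<le> gap_bounds n X ! j"
  proof (cases "Suc i = j")
    case False
    then have "Suc i < j" using ij by simp
    then show ?thesis using sorted_wrt_nth_less[OF sorted_gap_bounds, of "Suc i" j] length_gap_bounds jl by simp
  qed simp
  moreover have "gap_bounds n X ! Suc i \<in> X" using gap_bounds_inner ij jl by simp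
  ultimately show "\<exists>x\<in>X. a < x \<and> x < b" using a' b' by (meson le_less_trans)
qed

lemma all_gaps_cover:
  assumes "y \<in> {1..n}" "y \<notin> X"
  shows "\<exists>D\<in>set (all_gaps n X). y \<in> D"
proof -
  have ne: "gap_bounds n X \<noteq> []" unfolding gap_bounds_def by simp
  have last: "last (gap_bounds n X) = n + 1" unfolding gap_bounds_def by simp
  have "y \<notin> set (gap_bounds n X)" using assms set_gap_bounds by auto
  moreover have "gap_bounds n X ! 0 < y" "y < last (gap_bounds n X)" using assms gap_bounds_first last by auto
  ultimately obtain i where i: "Suc i < length (gap_bounds n X)" "gap_bounds n X ! i < y" "y < gap_bounds n X ! Suc i"
    using sorted_wrt_less_straddle[OF sorted_gap_bounds ne] by blast
  then have il: "i < card X + 1" using length_gap_bounds by simp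
  then have "y \<in> all_gaps n X ! i" using nth_all_gaps i by simp
  moreover have "all_gaps n X ! i \<in> set (all_gaps n X)" using il length_all_gaps by simp
  ultimately show ?thesis by blast
qed

lemma gapsD:
  assumes "D \<in> set (gaps n X)"
  shows "D \<noteq> {}" "D \<subseteq> {1..n}" "D \<inter> X = {}" "order_convex D"
  using assms all_gapsD[of D] gaps_eq_filter_all_gaps[OF finite_X] by auto

lemma sorted_gaps: "sorted_wrt lies_before (gaps n X)"
  unfolding gaps_eq_filter_all_gaps[OF finite_X] by (rule sorted_wrt_filter[OF sorted_all_gaps])

lemma gaps_separated:
  assumes "i < j" "j < length (gaps n X)" "a \<in> gaps n X ! i" "b \<in> gaps n X ! j"
  shows "\<exists>x\<in>X. a < x \<and> x < b"
  using sorted_wrt_nth_less[OF sorted_gaps assms(1,2)] assms(3,4) unfolding lies_before_def by blast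

lemma gaps_cover:
  assumes "y \<in> {1..n}" "y \<notin> X"
  shows "\<exists>D\<in>set (gaps n X). y \<in> D"
  using all_gaps_cover[OF assms] gaps_eq_filter_all_gaps[OF finite_X] by auto

lemma gaps_nth_disjoint:
  assumes "i < length (gaps n X)" "j < length (gaps n X)" "i \<noteq> j"
  shows "gaps n X ! i \<inter> gaps n X ! j = {}"
proof (rule ccontr)
  assume "gaps n X ! i \<inter> gaps n X ! j \<noteq> {}"
  then obtain y where y: "y \<in> gaps n X ! i" "y \<in> gaps n X ! j" by blast
  show False
  proof (cases "i < j")
    case True
    then show False using gaps_separated[OF True assms(2) y(1) y(2)] by auto
  next
    case False
    then have "j < i" using assms(3) by simp
    then show False using gaps_separated[OF _ assms(1) y(2) y(1)] by auto
  qed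
qed

lemma distinct_gaps: "distinct (gaps n X)"
  unfolding distinct_conv_nth
proof (intro allI impI)
  fix i j assume h: "i < length (gaps n X)" "j < length (gaps n X)" "i \<noteq> j"
  have "gaps n X ! i \<noteq> {}" using gapsD(1) h(1) by simp
  then show "gaps n X ! i \<noteq> gaps n X ! j" using gaps_nth_disjoint[OF h] by blast
qed

lemma gaps_disjoint:
  assumes "D \<in> set (gaps n X)" "D' \<in> set (gaps n X)" "D \<noteq> D'"
  shows "D \<inter> D' = {}"
proof -
  obtain i where i: "i < length (gaps n X)" "D = gaps n X ! i" using assms(1) by (metis in_set_conv_nth)
  obtain j where j: "j < length (gaps n X)" "D' = gaps n X ! j" using assms(2) by (metis in_set_conv_nth)
  have "i \<noteq> j" using assms(3) i j by blast
  then show ?thesis using gaps_nth_disjoint i j by simp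
qed

lemma subset_gap_if_not_straddling:
  assumes "T \<noteq> {}" "T \<subseteq> {1..n}" "T \<inter> X = {}"
    and nb: "\<And>a b x. a \<in> T \<Longrightarrow> b \<in> T \<Longrightarrow> x \<in> X \<Longrightarrow> a < x \<Longrightarrow> x < b \<Longrightarrow> False"
  shows "\<exists>D\<in>set (gaps n X). T \<subseteq> D"
proof -
  obtain a0 where a0: "a0 \<in> T" using assms(1) by blast
  obtain D0 where D0: "D0 \<in> set (gaps n X)" "a0 \<in> D0" using gaps_cover a0 assms(2,3) by blast
  have "T \<subseteq> D0"
  proof
    fix b assume b: "b \<in> T"
    obtain D where D: "D \<in> set (gaps n X)" "b \<in> D" using gaps_cover b assms(2,3) by blast
    have "D = D0"
    proof (rule ccontr)
      assume "D \<noteq> D0"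
      obtain i where i: "i < length (gaps n X)" "D0 = gaps n X ! i" using D0(1) by (metis in_set_conv_nth)
      obtain j where j: "j < length (gaps n X)" "D = gaps n X ! j" using D(1) by (metis in_set_conv_nth)
      have "i \<noteq> j" using \<open>D \<noteq> D0\<close> i j by blast
      then show False
      proof (cases "i < j")
        case True
        then obtain x where "x \<in> X" "a0 < x" "x < b" using gaps_separated[OF True j(1)] D0(2) D(2) i j by blast
        then show False using nb a0 b by blast
      next
        case False
        then have "j < i" using \<open>i \<noteq> j\<close> by simp
        then obtain x where "x \<in> X" "b < x" "x < a0" using gaps_separated[OF _ i(1)] D0(2) D(2) i j by blast
        then show False using nb a0 b by blast
      qed
    qed
    then show "b \<in> D0" using D(2) by simp
  qed
  then show ?thesis using D0(1) by blast
qed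

lemma insert_gaps_disjoint:
  assumes "p \<in> insert X (set (gaps n X))" "q \<in> insert X (set (gaps n X))" "p \<noteq> q"
  shows "p \<inter> q = {}"
  using assms gapsD(3) gaps_disjoint by blast

lemma partition_on_insert_gaps:
  assumes "X \<noteq> {}"
  shows "partition_on {1..n} (insert X (set (gaps n X)))"
proof (rule partition_onI)
  show "\<Union>(insert X (set (gaps n X))) = {1..n}"
  proof
    show "\<Union>(insert X (set (gaps n X))) \<subseteq> {1..n}" using X gapsD(2) by blast
    show "{1..n} \<subseteq> \<Union>(insert X (set (gaps n X)))"
      using gaps_cover by blast
  qed
  show "{} \<notin> insert X (set (gaps n X))" using assms gapsD(1) by blast
  show "disjnt p q" if "p \<in> insert X (set (gaps n X))" "q \<in> insert X (set (gaps n X))" "p \<noteq> q" for p q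
    using insert_gaps_disjoint[OF that] unfolding disjnt_def .
qed

lemma noncrossing_insert_gaps: "noncrossing (insert X (set (gaps n X)))"
  unfolding noncrossing_iff_not_crosses
proof (intro ballI impI)
  fix p q assume pq: "p \<in> insert X (set (gaps n X))" "q \<in> insert X (set (gaps n X))" "p \<noteq> q"
  have disj: "p \<inter> q = {}" by (rule insert_gaps_disjoint[OF pq])
  consider "p \<in> set (gaps n X)" | "q \<in> set (gaps n X)" using pq by blast
  then show "\<not> crosses p q"
  proof cases
    case 1
    then show ?thesis using not_crosses_if_order_convex(1)[of p p q] gapsD(4) disj by (simp add: Int_commute)
  next
    case 2
    then show ?thesis using not_crosses_if_order_convex(2)[of q q p] gapsD(4) disj by simp
  qed
qed

lemma not_in_gaps: "X \<noteq> {} \<Longrightarrow> X \<notin> set (gaps n X)"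
  using gapsD(3) by blast

lemma sum_card_gaps_le: "sum_list (map card (gaps n X)) \<le> n - card X"
proof -
  have "sum_list (map card (gaps n X)) = sum card (set (gaps n X))"
    by (rule sum_list_distinct_conv_sum_set[OF distinct_gaps])
  also have "\<dots> = card (\<Union>(set (gaps n X)))"
  proof (rule card_Union_disjoint[symmetric])
    show "pairwise disjnt (set (gaps n X))" unfolding pairwise_def disjnt_def using gaps_disjoint by blast
    show "finite A" if "A \<in> set (gaps n X)" for A using gapsD(2)[OF that] finite_subset by blast
  qed
  also have "\<dots> \<le> card ({1..n} - X)"
    by (rule card_mono) (use gapsD(2,3) in auto)
  also have "\<dots> = n - card X" using X by (simp add: card_Diff_subset finite_X)
  finally show ?thesis .
qed

end

section \<open>Splitting and gluing along a coarser partition\<close>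

lemma block_subset_or_disjoint:
  assumes "partition_on A SS" "coarser SS P" "\<rho> \<in> P" "S \<in> SS"
  shows "\<rho> \<subseteq> S \<or> \<rho> \<inter> S = {}"
proof -
  obtain S' where "S' \<in> SS" "\<rho> \<subseteq> S'" using assms(2,3) unfolding coarser_def by blast
  show ?thesis
  proof (cases "S' = S")
    case False
    then have "S' \<inter> S = {}" using partition_onD2[OF assms(1)] \<open>S' \<in> SS\<close> assms(4) unfolding disjoint_def by blast
    then show ?thesis using \<open>\<rho> \<subseteq> S'\<close> by blast
  qed (use \<open>\<rho> \<subseteq> S'\<close> in blast)
qed

lemma trace_Union_subset:
  assumes "partition_on A P" "L \<subseteq> P"
  shows "trace P (\<Union>L) = L"
proof
  show "trace P (\<Union>L) \<subseteq> L"
  proof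
    fix B' assume "B' \<in> trace P (\<Union>L)"
    then obtain B where B: "B \<in> P" "B \<inter> \<Union>L \<noteq> {}" "B' = B \<inter> \<Union>L" by (elim traceE)
    then obtain C x where C: "C \<in> L" "x \<in> B" "x \<in> C" by blast
    then have "B = C" using partition_same_block[OF assms(1) B(1)] assms(2) by blast
    then show "B' \<in> L" using B(3) C(1) by (simp add: Int_absorb2 Union_upper)
  qed
  show "L \<subseteq> trace P (\<Union>L)"
    using trace_memI_subset partition_onD3[OF assms(1)] assms(2) by blast
qed

lemma between_if_in_Conv:
  assumes "finite s" "s \<noteq> {}" "y \<in> Conv s" "y \<notin> s"
  shows "\<exists>a\<in>s. \<exists>b\<in>s. a < y \<and> y < b"
proof -
  have "Min s \<le> y" "y \<le> Max s" using assms(3) unfolding Conv_def by auto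
  moreover have "Min s \<in> s" "Max s \<in> s" using assms(1,2) by simp_all
  ultimately have "Min s < y" "y < Max s" using assms(4) by (metis le_less)+
  then show ?thesis using \<open>Min s \<in> s\<close> \<open>Max s \<in> s\<close> by blast
qed

lemma in_Conv_if_between:
  assumes "finite s" "a \<in> s" "b \<in> s" "a < y" "y < b"
  shows "y \<in> Conv s"
proof -
  have "Min s \<le> a" "b \<le> Max s" using assms by simp_all
  then have "Min s \<le> y" "y \<le> Max s" using assms(4,5) by linarith+
  then show ?thesis unfolding Conv_def by simp
qed

lemma lowersetsI:
  assumes "L \<subseteq> P"
    and cl: "\<And>\<sigma> \<tau>. \<sigma> \<in> P \<Longrightarrow> \<tau> \<in> L \<Longrightarrow> Conv \<sigma> \<inter> \<tau> \<noteq> {} \<Longrightarrow> \<sigma> \<in> L"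
  shows "L \<in> lowersets P"
proof -
  define R where "R = {(\<pi>, \<rho>). \<pi> \<in> P \<and> \<rho> \<in> P \<and> Conv \<pi> \<inter> \<rho> \<noteq> {}}"
  have "\<sigma> \<in> L" if "(\<sigma>, \<tau>) \<in> R\<^sup>+" "\<tau> \<in> L" for \<sigma> \<tau>
    using that
  proof (induction arbitrary: rule: trancl_induct)
    case (base y)
    then show ?case using cl unfolding R_def by blast
  next
    case (step y z)
    then have "y \<in> L" using cl unfolding R_def by blast
    then show ?case using step.IH by blast
  qed
  then show ?thesis unfolding lowersets_def is_lowerset_def arrow_def R_def using assms(1) by blast
qed

lemma lowersets_Conv_closed:
  assumes "L \<in> lowersets P" "\<sigma> \<in> P" "\<tau> \<in> L" "Conv \<sigma> \<inter> \<tau> \<noteq> {}"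
  shows "\<sigma> \<in> L"
proof -
  have "\<tau> \<in> P" using assms(1,3) unfolding lowersets_def is_lowerset_def by blast
  then have "(\<sigma>, \<tau>) \<in> arrow P" unfolding arrow_def using assms(2,4) by (intro r_into_trancl) simp
  then show ?thesis using assms(1,2,3) unfolding lowersets_def is_lowerset_def by blast
qed

lemma lowersets_subset: "L \<in> lowersets P \<Longrightarrow> L \<subseteq> P"
  unfolding lowersets_def is_lowerset_def by blast

definition meet :: "nat set set \<Rightarrow> nat set set \<Rightarrow> nat set set" where
  "meet P1 P2 = {B \<inter> C | B C. B \<in> P1 \<and> C \<in> P2 \<and> B \<inter> C \<noteq> {}}"

lemma partition_on_meet:
  assumes "partition_on A P1" "partition_on A P2"
  shows "partition_on A (meet P1 P2)"
proof (rule partition_onI)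
  show "\<Union>(meet P1 P2) = A"
  proof
    show "\<Union>(meet P1 P2) \<subseteq> A" unfolding meet_def using partition_on_block_subset[OF assms(1)] by blast
    show "A \<subseteq> \<Union>(meet P1 P2)"
    proof
      fix x assume "x \<in> A"
      obtain B where "B \<in> P1" "x \<in> B" using partition_on_obtain_block[OF assms(1) \<open>x \<in> A\<close>] by blast
      obtain C where "C \<in> P2" "x \<in> C" using partition_on_obtain_block[OF assms(2) \<open>x \<in> A\<close>] by blast
      have "B \<inter> C \<in> meet P1 P2"
        unfolding meet_def using \<open>B \<in> P1\<close> \<open>C \<in> P2\<close> \<open>x \<in> B\<close> \<open>x \<in> C\<close> by blast
      then show "x \<in> \<Union>(meet P1 P2)" using \<open>x \<in> B\<close> \<open>x \<in> C\<close> by blast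
    qed
  qed
  show "{} \<notin> meet P1 P2" unfolding meet_def by blast
  fix p q assume "p \<in> meet P1 P2" "q \<in> meet P1 P2" "p \<noteq> q"
  then obtain B C B' C' where p: "p = B \<inter> C" "B \<in> P1" "C \<in> P2" and q: "q = B' \<inter> C'" "B' \<in> P1" "C' \<in> P2"
    unfolding meet_def by blast
  show "disjnt p q"
  proof (rule ccontr)
    assume "\<not> disjnt p q"
    then obtain x where "x \<in> p" "x \<in> q" unfolding disjnt_def by blast
    then have "B = B'" "C = C'" using partition_same_block[OF assms(1)] partition_same_block[OF assms(2)] p q by blast+
    then show False using p q \<open>p \<noteq> q\<close> by simp
  qed
qed

lemma noncrossing_meet:
  assumes "noncrossing P1" "noncrossing P2"
  shows "noncrossing (meet P1 P2)"
  unfolding noncrossing_iff_not_crosses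
proof (intro ballI impI notI)
  fix p q assume h: "p \<in> meet P1 P2" "q \<in> meet P1 P2" "p \<noteq> q" "crosses p q"
  then obtain B C B' C' where p: "p = B \<inter> C" "B \<in> P1" "C \<in> P2" and q: "q = B' \<inter> C'" "B' \<in> P1" "C' \<in> P2"
    unfolding meet_def by blast
  have "crosses B B'" using crosses_mono[OF h(4)] p q by blast
  then have "B = B'" using assms(1) p q unfolding noncrossing_iff_not_crosses by blast
  have "crosses C C'" using crosses_mono[OF h(4)] p q by blast
  then have "C = C'" using assms(2) p q unfolding noncrossing_iff_not_crosses by blast
  show False using \<open>B = B'\<close> \<open>C = C'\<close> p q h(3) by simp
qed

lemma coarser_meet:
  assumes "coarser P1 Q" "coarser P2 Q" "{} \<notin> Q"
  shows "coarser (meet P1 P2) Q"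
  unfolding coarser_def
proof
  fix \<tau> assume "\<tau> \<in> Q"
  obtain B where "B \<in> P1" "\<tau> \<subseteq> B" using assms(1) \<open>\<tau> \<in> Q\<close> unfolding coarser_def by blast
  obtain C where "C \<in> P2" "\<tau> \<subseteq> C" using assms(2) \<open>\<tau> \<in> Q\<close> unfolding coarser_def by blast
  have "\<tau> \<noteq> {}" using assms(3) \<open>\<tau> \<in> Q\<close> by blast
  then have "B \<inter> C \<in> meet P1 P2"
    unfolding meet_def using \<open>B \<in> P1\<close> \<open>C \<in> P2\<close> \<open>\<tau> \<subseteq> B\<close> \<open>\<tau> \<subseteq> C\<close> by blast
  then show "\<exists>C\<in>meet P1 P2. \<tau> \<subseteq> C" using \<open>\<tau> \<subseteq> B\<close> \<open>\<tau> \<subseteq> C\<close> by blast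
qed

definition convex_separated :: "nat set \<Rightarrow> nat set \<Rightarrow> bool" where
  "convex_separated S \<rho> \<longleftrightarrow>
     (\<exists>D. order_convex D \<and> ((S \<subseteq> D \<and> \<rho> \<inter> D = {}) \<or> (\<rho> \<subseteq> D \<and> S \<inter> D = {})))"

lemma not_crosses_if_convex_separated:
  assumes "convex_separated S \<rho>" "\<alpha> \<subseteq> S"
  shows "\<not> crosses \<alpha> \<rho>" "\<not> crosses \<rho> \<alpha>"
proof -
  obtain D where D: "order_convex D" "(S \<subseteq> D \<and> \<rho> \<inter> D = {}) \<or> (\<rho> \<subseteq> D \<and> S \<inter> D = {})"
    using assms(1) unfolding convex_separated_def by blast
  from D(2) have "\<not> crosses \<alpha> \<rho> \<and> \<not> crosses \<rho> \<alpha>"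
  proof
    assume "S \<subseteq> D \<and> \<rho> \<inter> D = {}"
    then show ?thesis using not_crosses_if_order_convex[of \<alpha> D \<rho>] D(1) assms(2) by blast
  next
    assume "\<rho> \<subseteq> D \<and> S \<inter> D = {}"
    then have "\<alpha> \<inter> D = {}" using assms(2) by blast
    then show ?thesis using not_crosses_if_order_convex[of \<rho> D \<alpha>] D(1) \<open>\<rho> \<subseteq> D \<and> S \<inter> D = {}\<close> by blast
  qed
  then show "\<not> crosses \<alpha> \<rho>" "\<not> crosses \<rho> \<alpha>" by blast+
qed

lemma partition_on_extend_outside:
  assumes P: "partition_on A P" and S: "S \<subseteq> A" and R: "partition_on S R"
    and io: "\<And>\<rho>. \<rho> \<in> P \<Longrightarrow> \<rho> \<subseteq> S \<or> \<rho> \<inter> S = {}"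
  shows "partition_on A (R \<union> {\<rho> \<in> P. \<rho> \<inter> S = {}})"
proof (rule partition_onI)
  have RS: "\<alpha> \<subseteq> S" if "\<alpha> \<in> R" for \<alpha> using partition_on_block_subset[OF R that] .
  show "\<Union>(R \<union> {\<rho> \<in> P. \<rho> \<inter> S = {}}) = A"
  proof
    show "\<Union>(R \<union> {\<rho> \<in> P. \<rho> \<inter> S = {}}) \<subseteq> A"
      using RS S partition_on_block_subset[OF P] by blast
    show "A \<subseteq> \<Union>(R \<union> {\<rho> \<in> P. \<rho> \<inter> S = {}})"
    proof
      fix x assume "x \<in> A"
      show "x \<in> \<Union>(R \<union> {\<rho> \<in> P. \<rho> \<inter> S = {}})"
      proof (cases "x \<in> S")
        case True
        then show ?thesis using partition_onD1[OF R] by blast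
      next
        case False
        obtain \<rho> where "\<rho> \<in> P" "x \<in> \<rho>" using partition_on_obtain_block[OF P \<open>x \<in> A\<close>] by blast
        then have "\<rho> \<inter> S = {}" using io False by blast
        then show ?thesis using \<open>\<rho> \<in> P\<close> \<open>x \<in> \<rho>\<close> by blast
      qed
    qed
  qed
  show "{} \<notin> R \<union> {\<rho> \<in> P. \<rho> \<inter> S = {}}"
    using partition_onD3[OF R] partition_onD3[OF P] by blast
  fix p q assume pq: "p \<in> R \<union> {\<rho> \<in> P. \<rho> \<inter> S = {}}" "q \<in> R \<union> {\<rho> \<in> P. \<rho> \<inter> S = {}}" "p \<noteq> q"
  consider "p \<in> R" "q \<in> R" | "p \<in> R" "q \<inter> S = {}" | "p \<inter> S = {}" "q \<in> R"
    | "p \<in> P" "q \<in> P" using pq(1,2) by blast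
  then show "disjnt p q"
  proof cases
    case 1
    then show ?thesis using pq(3) partition_onD2[OF R] unfolding disjoint_def disjnt_def by blast
  next
    case 4
    then show ?thesis using pq(3) partition_onD2[OF P] unfolding disjoint_def disjnt_def by blast
  qed (use RS in \<open>auto simp: disjnt_def\<close>)
qed

lemma noncrossing_extend_outside:
  assumes P: "noncrossing P" and R: "noncrossing R" "\<Union>R \<subseteq> S"
    and sep: "\<And>\<rho>. \<rho> \<in> P \<Longrightarrow> \<rho> \<inter> S = {} \<Longrightarrow> convex_separated S \<rho>"
  shows "noncrossing (R \<union> {\<rho> \<in> P. \<rho> \<inter> S = {}})"
  unfolding noncrossing_iff_not_crosses
proof (intro ballI impI)
  fix p q assume pq: "p \<in> R \<union> {\<rho> \<in> P. \<rho> \<inter> S = {}}" "q \<in> R \<union> {\<rho> \<in> P. \<rho> \<inter> S = {}}" "p \<noteq> q"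
  consider "p \<in> R" "q \<in> R" | "p \<in> R" "q \<in> P" "q \<inter> S = {}" | "p \<in> P" "p \<inter> S = {}" "q \<in> R"
    | "p \<in> P" "q \<in> P" using pq(1,2) by blast
  then show "\<not> crosses p q"
  proof cases
    case 1
    then show ?thesis using pq(3) R(1) unfolding noncrossing_iff_not_crosses by blast
  next
    case 2
    then show ?thesis using not_crosses_if_convex_separated(1)[OF sep] R(2) by blast
  next
    case 3
    then show ?thesis using not_crosses_if_convex_separated(2)[OF sep] R(2) by blast
  next
    case 4
    then show ?thesis using pq(3) P unfolding noncrossing_iff_not_crosses by blast
  qed
qed

text \<open>A noncrossing coarsening of the trace of \<open>Q\<close> on \<open>S\<close> extends, by the blocks of \<open>P\<close>
  outside \<open>S\<close>, to a noncrossing coarsening of \<open>Q\<close>; the separation hypothesis rules out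
  crossings with those blocks.\<close>

lemma is_nc_closure_trace:
  assumes cl: "is_nc_closure A Q P" and Q: "partition_on A Q"
    and SS: "partition_on A SS" "coarser SS P"
    and sep: "\<And>S \<rho>. S \<in> SS \<Longrightarrow> \<rho> \<in> P \<Longrightarrow> \<rho> \<inter> S = {} \<Longrightarrow> convex_separated S \<rho>"
    and S: "S \<in> SS"
  shows "is_nc_closure S (trace Q S) (trace P S)"
proof -
  have P: "partition_on A P" "noncrossing P" "coarser P Q"
    and least: "\<And>R. partition_on A R \<Longrightarrow> noncrossing R \<Longrightarrow> coarser R Q \<Longrightarrow> coarser R P"
    using cl unfolding is_nc_closure_def by blast+
  have SA: "S \<subseteq> A" using partition_on_block_subset[OF SS(1) S] .
  have io: "\<rho> \<subseteq> S \<or> \<rho> \<inter> S = {}" if "\<rho> \<in> P" for \<rho> using block_subset_or_disjoint[OF SS that S] .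
  have "coarser R (trace P S)"
    if R: "partition_on S R" "noncrossing R" "coarser R (trace Q S)" for R
  proof -
    define R2 where "R2 = R \<union> {\<rho> \<in> P. \<rho> \<inter> S = {}}"
    have "partition_on A R2"
      unfolding R2_def by (rule partition_on_extend_outside[OF P(1) SA R(1) io])
    moreover have "noncrossing R2"
      unfolding R2_def using partition_onD1[OF R(1)] sep[OF S]
      by (intro noncrossing_extend_outside[OF P(2) R(2)]) auto
    moreover have "coarser R2 Q"
      unfolding coarser_def
    proof
      fix \<tau> assume "\<tau> \<in> Q"
      obtain \<rho> where "\<rho> \<in> P" "\<tau> \<subseteq> \<rho>" using P(3) \<open>\<tau> \<in> Q\<close> unfolding coarser_def by blast
      show "\<exists>C\<in>R2. \<tau> \<subseteq> C"
      proof (cases "\<rho> \<inter> S = {}")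
        case True
        then show ?thesis unfolding R2_def using \<open>\<rho> \<in> P\<close> \<open>\<tau> \<subseteq> \<rho>\<close> by blast
      next
        case False
        then have "\<rho> \<subseteq> S" using io \<open>\<rho> \<in> P\<close> by blast
        have "\<tau> \<in> trace Q S"
          using trace_memI_subset[OF \<open>\<tau> \<in> Q\<close>] \<open>\<tau> \<subseteq> \<rho>\<close> \<open>\<rho> \<subseteq> S\<close> partition_onD3[OF Q] \<open>\<tau> \<in> Q\<close>
          by blast
        then obtain \<alpha> where "\<alpha> \<in> R" "\<tau> \<subseteq> \<alpha>" using R(3) unfolding coarser_def by metis
        then show ?thesis unfolding R2_def by blast
      qed
    qed
    ultimately have "coarser R2 P" using least by blast
    show ?thesis
      unfolding coarser_def
    proof
      fix \<beta> assume "\<beta> \<in> trace P S"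
      then obtain \<rho> where \<rho>: "\<rho> \<in> P" "\<rho> \<inter> S \<noteq> {}" "\<beta> = \<rho> \<inter> S" by (elim traceE)
      then have "\<beta> = \<rho>" using io by blast
      obtain \<gamma> where "\<gamma> \<in> R2" "\<rho> \<subseteq> \<gamma>" using \<open>coarser R2 P\<close> \<rho>(1) unfolding coarser_def by blast
      then show "\<exists>C\<in>R. \<beta> \<subseteq> C" using \<rho>(2) \<open>\<beta> = \<rho>\<close> unfolding R2_def by blast
    qed
  qed
  then show ?thesis
    unfolding is_nc_closure_def
    using partition_on_trace[OF P(1) SA] noncrossing_trace[OF P(2)] coarser_trace[OF P(3)] by blast
qed

lemma is_nc_closure_glue:
  assumes SS: "partition_on A SS" "coarser SS P" "coarser SS Q"
    and P: "partition_on A P" "noncrossing P" and Q: "partition_on A Q"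
    and loc: "\<And>S. S \<in> SS \<Longrightarrow> is_nc_closure S (trace Q S) (trace P S)"
  shows "is_nc_closure A Q P"
proof -
  have "coarser P Q"
    unfolding coarser_def
  proof
    fix \<tau> assume "\<tau> \<in> Q"
    obtain S where S: "S \<in> SS" "\<tau> \<subseteq> S" using SS(3) \<open>\<tau> \<in> Q\<close> unfolding coarser_def by blast
    have "\<tau> \<in> trace Q S"
      using trace_memI_subset[OF \<open>\<tau> \<in> Q\<close> S(2)] partition_onD3[OF Q] \<open>\<tau> \<in> Q\<close> by blast
    moreover have "coarser (trace P S) (trace Q S)" using loc[OF S(1)] unfolding is_nc_closure_def by blast
    ultimately obtain \<beta> where "\<beta> \<in> trace P S" "\<tau> \<subseteq> \<beta>" unfolding coarser_def by blast
    then obtain \<rho> where "\<rho> \<in> P" "\<beta> = \<rho> \<inter> S" by (elim traceE)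
    then show "\<exists>C\<in>P. \<tau> \<subseteq> C" using \<open>\<tau> \<subseteq> \<beta>\<close> by blast
  qed
  moreover have "coarser R P" if R: "partition_on A R" "noncrossing R" "coarser R Q" for R
    unfolding coarser_def
  proof
    fix \<rho> assume "\<rho> \<in> P"
    obtain S where S: "S \<in> SS" "\<rho> \<subseteq> S" using SS(2) \<open>\<rho> \<in> P\<close> unfolding coarser_def by blast
    have SA: "S \<subseteq> A" using partition_on_block_subset[OF SS(1) S(1)] .
    have \<rho>S: "\<rho> \<in> trace P S"
      using trace_memI_subset[OF \<open>\<rho> \<in> P\<close> S(2)] partition_onD3[OF P(1)] \<open>\<rho> \<in> P\<close> by blast
    have "partition_on S (trace R S)" by (rule partition_on_trace[OF R(1) SA])
    moreover have "noncrossing (trace R S)" by (rule noncrossing_trace[OF R(2)])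
    moreover have "coarser (trace R S) (trace Q S)" by (rule coarser_trace[OF R(3)])
    ultimately have "coarser (trace R S) (trace P S)" using loc[OF S(1)] unfolding is_nc_closure_def by blast
    then obtain \<gamma> where "\<gamma> \<in> trace R S" "\<rho> \<subseteq> \<gamma>" using \<rho>S unfolding coarser_def by blast
    then obtain C where "C \<in> R" "\<gamma> = C \<inter> S" by (elim traceE)
    then show "\<exists>C\<in>R. \<rho> \<subseteq> C" using \<open>\<rho> \<subseteq> \<gamma>\<close> by blast
  qed
  ultimately show ?thesis unfolding is_nc_closure_def using P by blast
qed

lemma partition_eq_UN_trace:
  assumes "partition_on A SS" "coarser SS Q" "partition_on A Q"
  shows "Q = (\<Union>S\<in>SS. trace Q S)"
proof
  show "Q \<subseteq> (\<Union>S\<in>SS. trace Q S)"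
  proof
    fix \<tau> assume "\<tau> \<in> Q"
    obtain S where S: "S \<in> SS" "\<tau> \<subseteq> S" using assms(2) \<open>\<tau> \<in> Q\<close> unfolding coarser_def by blast
    have "\<tau> \<in> trace Q S"
      using trace_memI_subset[OF \<open>\<tau> \<in> Q\<close> S(2)] partition_onD3[OF assms(3)] \<open>\<tau> \<in> Q\<close> by blast
    then show "\<tau> \<in> (\<Union>S\<in>SS. trace Q S)" using S(1) by blast
  qed
  show "(\<Union>S\<in>SS. trace Q S) \<subseteq> Q"
  proof
    fix \<beta> assume "\<beta> \<in> (\<Union>S\<in>SS. trace Q S)"
    then obtain S where S: "S \<in> SS" "\<beta> \<in> trace Q S" by blast
    then obtain \<tau> where \<tau>: "\<tau> \<in> Q" "\<tau> \<inter> S \<noteq> {}" "\<beta> = \<tau> \<inter> S" by (elim traceE)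
    have "\<tau> \<subseteq> S \<or> \<tau> \<inter> S = {}" by (rule block_subset_or_disjoint[OF assms(1,2) \<tau>(1) S(1)])
    then have "\<beta> = \<tau>" using \<tau> by blast
    then show "\<beta> \<in> Q" using \<tau>(1) by simp
  qed
qed

lemma glued_partition:
  assumes SS: "partition_on A SS" and G: "\<And>S. S \<in> SS \<Longrightarrow> partition_on S (G S)"
  shows "partition_on A (\<Union>S\<in>SS. G S)" "\<And>S. S \<in> SS \<Longrightarrow> trace (\<Union>S\<in>SS. G S) S = G S"
    "coarser SS (\<Union>S\<in>SS. G S)"
proof -
  have GS: "\<beta> \<subseteq> S" if "S \<in> SS" "\<beta> \<in> G S" for S \<beta> using partition_on_block_subset[OF G[OF that(1)] that(2)] .
  have Gne: "\<beta> \<noteq> {}" if "S \<in> SS" "\<beta> \<in> G S" for S \<beta> using partition_onD3[OF G[OF that(1)]] that(2) by blast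
  have dS: "S \<inter> S' = {}" if "S \<in> SS" "S' \<in> SS" "S \<noteq> S'" for S S'
    using partition_onD2[OF SS] that unfolding disjoint_def by blast
  show part: "partition_on A (\<Union>S\<in>SS. G S)"
  proof (rule partition_onI)
    show "\<Union>(\<Union>S\<in>SS. G S) = A"
    proof
      show "\<Union>(\<Union>S\<in>SS. G S) \<subseteq> A" using GS partition_on_block_subset[OF SS] by blast
      show "A \<subseteq> \<Union>(\<Union>S\<in>SS. G S)"
      proof
        fix x assume "x \<in> A"
        obtain S where "S \<in> SS" "x \<in> S" using partition_on_obtain_block[OF SS \<open>x \<in> A\<close>] by blast
        then obtain \<beta> where "\<beta> \<in> G S" "x \<in> \<beta>" using partition_on_obtain_block[OF G] by blast
        then show "x \<in> \<Union>(\<Union>S\<in>SS. G S)" using \<open>S \<in> SS\<close> by blast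
      qed
    qed
    show "{} \<notin> (\<Union>S\<in>SS. G S)" using Gne by blast
    fix p q assume "p \<in> (\<Union>S\<in>SS. G S)" "q \<in> (\<Union>S\<in>SS. G S)" "p \<noteq> q"
    then obtain S S' where S: "S \<in> SS" "p \<in> G S" and S': "S' \<in> SS" "q \<in> G S'" by blast
    show "disjnt p q"
    proof (cases "S = S'")
      case True
      then show ?thesis using partition_onD2[OF G[OF S(1)]] S S' \<open>p \<noteq> q\<close> unfolding disjoint_def disjnt_def by blast
    next
      case False
      then show ?thesis using dS[OF S(1) S'(1) False] GS S S' unfolding disjnt_def by blast
    qed
  qed
  show co: "coarser SS (\<Union>S\<in>SS. G S)" unfolding coarser_def using GS by blast
  fix S assume S: "S \<in> SS"
  have "trace (\<Union>S\<in>SS. G S) S = {\<beta> \<in> (\<Union>S\<in>SS. G S). \<beta> \<subseteq> S}"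
    by (rule trace_saturated) (use block_subset_or_disjoint[OF SS co _ S] Gne in blast)+
  also have "\<dots> = G S"
  proof
    show "{\<beta> \<in> (\<Union>S\<in>SS. G S). \<beta> \<subseteq> S} \<subseteq> G S"
    proof
      fix \<beta> assume "\<beta> \<in> {\<beta> \<in> (\<Union>S\<in>SS. G S). \<beta> \<subseteq> S}"
      then obtain S' where "S' \<in> SS" "\<beta> \<in> G S'" "\<beta> \<subseteq> S" by blast
      moreover have "\<beta> \<noteq> {}" using Gne calculation by blast
      moreover have "\<beta> \<subseteq> S'" using GS calculation by blast
      ultimately have "S' = S" using dS S by blast
      then show "\<beta> \<in> G S" using \<open>\<beta> \<in> G S'\<close> by simp
    qed
    show "G S \<subseteq> {\<beta> \<in> (\<Union>S\<in>SS. G S). \<beta> \<subseteq> S}" using GS S by blast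
  qed
  finally show "trace (\<Union>S\<in>SS. G S) S = G S" .
qed

lemma coarser_insert_gaps_lowerset:
  assumes Q: "partition_on {1..n} Q" and L: "L \<in> lowersets Q"
  shows "coarser (insert (\<Union>L) (set (gaps n (\<Union>L)))) Q"
  unfolding coarser_def
proof
  define X where "X = \<Union>L"
  have LQ: "L \<subseteq> Q" using lowersets_subset[OF L] .
  have X: "X \<subseteq> {1..n}" unfolding X_def using LQ partition_on_block_subset[OF Q] by blast
  fix \<tau> assume \<tau>Q: "\<tau> \<in> Q"
  show "\<exists>C\<in>insert (\<Union>L) (set (gaps n (\<Union>L))). \<tau> \<subseteq> C"
  proof (cases "\<tau> \<in> L")
    case True
    then show ?thesis by blast
  next
    case False
    have \<tau>sub: "\<tau> \<subseteq> {1..n}" using partition_on_block_subset[OF Q \<tau>Q] .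
    have "\<tau> \<inter> X = {}"
    proof (rule ccontr)
      assume "\<tau> \<inter> X \<noteq> {}"
      then obtain x C where "x \<in> \<tau>" "C \<in> L" "x \<in> C" unfolding X_def by blast
      then have "\<tau> = C" using partition_same_block[OF Q \<tau>Q] LQ by blast
      then show False using False \<open>C \<in> L\<close> by simp
    qed
    moreover have False if h: "a \<in> \<tau>" "b \<in> \<tau>" "x \<in> X" "a < x" "x < b" for a b x
    proof -
      have "x \<in> Conv \<tau>" using in_Conv_if_between[OF finite_subset[OF \<tau>sub]] h by blast
      obtain C where "C \<in> L" "x \<in> C" using h(3) unfolding X_def by blast
      then have "\<tau> \<in> L" using lowersets_Conv_closed[OF L \<tau>Q] \<open>x \<in> Conv \<tau>\<close> by blast
      then show False using False by simp
    qed
    moreover have "\<tau> \<noteq> {}" using partition_onD3[OF Q] \<tau>Q by blast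
    ultimately obtain D where "D \<in> set (gaps n X)" "\<tau> \<subseteq> D"
      using subset_gap_if_not_straddling[OF X _ \<tau>sub] by blast
    then show ?thesis unfolding X_def by blast
  qed
qed

section \<open>The block containing 1\<close>

locale first_block =
  fixes n :: nat and P :: "nat set set" and p1 :: "nat set"
  assumes partition_P: "partition_on {1..n} P" and noncrossing_P: "noncrossing P"
    and p1_in_P: "p1 \<in> P" and one_in_p1: "1 \<in> p1"
begin

definition gap_partition :: "nat set set" where
  "gap_partition = insert p1 (set (gaps n p1))"

lemma p1_subset: "p1 \<subseteq> {1..n}"
  using partition_on_block_subset[OF partition_P p1_in_P] .

lemma finite_p1: "finite p1"
  using p1_subset finite_subset by blast

lemma block_disjoint_p1: "\<rho> \<in> P \<Longrightarrow> \<rho> \<noteq> p1 \<Longrightarrow> \<rho> \<inter> p1 = {}"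
  using partition_same_block[OF partition_P _ p1_in_P] by blast

text \<open>Since \<open>p1\<close> contains the least point 1, a block nested around a point of \<open>p1\<close> would
  cross \<open>p1\<close>.\<close>

lemma not_between_p1:
  assumes "\<rho> \<in> P" "\<rho> \<noteq> p1" "a \<in> \<rho>" "b \<in> \<rho>" "y \<in> p1" "a < y" "y < b"
  shows False
proof -
  have "1 \<notin> \<rho>" using block_disjoint_p1[OF assms(1,2)] one_in_p1 by blast
  moreover have "1 \<le> a" using partition_on_block_subset[OF partition_P assms(1)] assms(3) by auto
  ultimately have "1 < a" using assms(3) by (metis le_less)
  then have "crosses p1 \<rho>" by (rule crossesI[OF one_in_p1 assms(5) assms(3) assms(4) _ assms(6,7)])
  then show False using noncrossing_P p1_in_P assms(1,2) unfolding noncrossing_iff_not_crosses by blast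
qed

lemma Conv_disjoint_p1:
  assumes "\<rho> \<in> P" "\<rho> \<noteq> p1" "\<sigma> \<subseteq> \<rho>" "\<sigma> \<noteq> {}"
  shows "Conv \<sigma> \<inter> p1 = {}"
proof (rule ccontr)
  assume "Conv \<sigma> \<inter> p1 \<noteq> {}"
  then obtain y where y: "y \<in> Conv \<sigma>" "y \<in> p1" by blast
  have fin: "finite \<sigma>"
    using partition_on_block_subset[OF partition_P assms(1)] assms(3) finite_subset by (metis finite_atLeastAtMost)
  have "y \<notin> \<sigma>" using block_disjoint_p1[OF assms(1,2)] assms(3) y(2) by blast
  then obtain a b where "a \<in> \<sigma>" "b \<in> \<sigma>" "a < y" "y < b" using between_if_in_Conv[OF fin assms(4) y(1)] by blast
  then show False using not_between_p1[OF assms(1,2)] assms(3) y(2) by blast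
qed

lemma block_subset_gap:
  assumes "\<rho> \<in> P" "\<rho> \<noteq> p1"
  shows "\<exists>D\<in>set (gaps n p1). \<rho> \<subseteq> D"
proof (rule subset_gap_if_not_straddling[OF p1_subset])
  show "\<rho> \<noteq> {}" using partition_onD3[OF partition_P] assms(1) by blast
  show "\<rho> \<subseteq> {1..n}" using partition_on_block_subset[OF partition_P assms(1)] .
  show "\<rho> \<inter> p1 = {}" using block_disjoint_p1[OF assms] .
  show "\<And>a b x. a \<in> \<rho> \<Longrightarrow> b \<in> \<rho> \<Longrightarrow> x \<in> p1 \<Longrightarrow> a < x \<Longrightarrow> x < b \<Longrightarrow> False"
    using not_between_p1[OF assms] by blast
qed

lemma partition_on_gap_partition: "partition_on {1..n} gap_partition"
  unfolding gap_partition_def using partition_on_insert_gaps[OF p1_subset] one_in_p1 by blast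

lemma gap_partition_coarser: "coarser gap_partition P"
  unfolding coarser_def gap_partition_def using block_subset_gap by blast

lemma convex_separated_gap_partition:
  assumes S: "S \<in> gap_partition" and \<rho>: "\<rho> \<in> P" "\<rho> \<inter> S = {}"
  shows "convex_separated S \<rho>"
proof (cases "S = p1")
  case True
  then have "\<rho> \<noteq> p1" using \<rho> one_in_p1 by blast
  then obtain D where D: "D \<in> set (gaps n p1)" "\<rho> \<subseteq> D" using block_subset_gap[OF \<rho>(1)] by blast
  have "order_convex D" "D \<inter> p1 = {}" using gapsD[OF p1_subset D(1)] by blast+
  then show ?thesis unfolding convex_separated_def using D(2) True by blast
next
  case False
  then have "S \<in> set (gaps n p1)" using S unfolding gap_partition_def by blast
  then have "order_convex S" using gapsD[OF p1_subset] by blast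
  then show ?thesis unfolding convex_separated_def using \<rho>(2) by blast
qed

lemma trace_P_p1: "trace P p1 = {p1}"
proof -
  have "trace P p1 = {B \<in> P. B \<subseteq> p1}"
    by (rule trace_saturated) (use block_disjoint_p1 partition_onD3[OF partition_P] in blast)+
  also have "\<dots> = {p1}"
  proof
    show "{B \<in> P. B \<subseteq> p1} \<subseteq> {p1}"
    proof
      fix B assume "B \<in> {B \<in> P. B \<subseteq> p1}"
      then have B: "B \<in> P" "B \<subseteq> p1" by auto
      have "B \<noteq> {}" using partition_onD3[OF partition_P] B(1) by blast
      then show "B \<in> {p1}" using block_disjoint_p1[OF B(1)] B(2) by blast
    qed
    show "{p1} \<subseteq> {B \<in> P. B \<subseteq> p1}" using p1_in_P by simp
  qed
  finally show ?thesis .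
qed

lemma singleton_p1_lowerset: "{p1} \<in> lowersets P"
proof (rule lowersetsI)
  show "{p1} \<subseteq> P" using p1_in_P by simp
  fix \<sigma> \<tau> assume h: "\<sigma> \<in> P" "\<tau> \<in> {p1}" "Conv \<sigma> \<inter> \<tau> \<noteq> {}"
  have "\<sigma> \<noteq> {}" using partition_onD3[OF partition_P] h(1) by blast
  show "\<sigma> \<in> {p1}"
  proof (rule ccontr)
    assume "\<sigma> \<notin> {p1}"
    then have "Conv \<sigma> \<inter> p1 = {}" using Conv_disjoint_p1[OF h(1) _ _ \<open>\<sigma> \<noteq> {}\<close>] by blast
    then show False using h(2,3) by simp
  qed
qed

lemma lowerset_eq_singleton_p1:
  assumes L: "L \<in> lowersets P" and one: "1 \<in> \<Union>L"
    and single: "part_image (rank (\<Union>L)) L = {{1..card (\<Union>L)}}"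
  shows "L = {p1}"
proof -
  have LP: "L \<subseteq> P" using lowersets_subset[OF L] .
  have "\<Union>L \<subseteq> {1..n}" using LP partition_on_block_subset[OF partition_P] by blast
  then have inj: "inj_on (rank (\<Union>L)) (\<Union>L)" using inj_on_rank finite_subset[of "\<Union>L" "{1..n}"] by simp
  obtain B0 where B0: "B0 \<in> L" "1 \<in> B0" using one by blast
  have "B0 = p1" using partition_same_block[OF partition_P _ p1_in_P] B0 LP one_in_p1 by blast
  have "B = B0" if B: "B \<in> L" for B
  proof -
    have "rank (\<Union>L) ` B \<in> part_image (rank (\<Union>L)) L" "rank (\<Union>L) ` B0 \<in> part_image (rank (\<Union>L)) L"
      unfolding part_image_def using B B0 by blast+
    then have "rank (\<Union>L) ` B = rank (\<Union>L) ` B0" using single by simp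
    moreover have "B \<subseteq> \<Union>L" "B0 \<subseteq> \<Union>L" using B B0 by blast+
    ultimately show "B = B0" using inj_on_image_eq_iff[OF inj \<open>B \<subseteq> \<Union>L\<close> \<open>B0 \<subseteq> \<Union>L\<close>] by simp
  qed
  then show ?thesis using B0 \<open>B0 = p1\<close> by blast
qed

end

locale first_block_closure =
  fixes n :: nat and Q P :: "nat set set" and p1 :: "nat set"
  assumes partition_Q: "partition_on {1..n} Q" and closure_Q: "is_nc_closure {1..n} Q P"
    and p1_in_P: "p1 \<in> P" and one_in_p1: "1 \<in> p1"
begin

lemma partition_P: "partition_on {1..n} P" and noncrossing_P: "noncrossing P"
  and P_coarser_Q: "coarser P Q"
  using closure_Q unfolding is_nc_closure_def by blast+

sublocale first_block n P p1
  using partition_P noncrossing_P p1_in_P one_in_p1 by unfold_locales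

lemma Q_block_subset_or_disjoint_p1: "\<tau> \<in> Q \<Longrightarrow> \<tau> \<subseteq> p1 \<or> \<tau> \<inter> p1 = {}"
  using P_coarser_Q block_disjoint_p1 unfolding coarser_def by blast

lemma trace_Q_p1: "trace Q p1 = {B \<in> Q. B \<subseteq> p1}"
  by (rule trace_saturated) (use Q_block_subset_or_disjoint_p1 partition_onD3[OF partition_Q] in blast)+

lemma Union_trace_Q_p1: "\<Union>(trace Q p1) = p1"
  using partition_onD1[OF partition_on_trace[OF partition_Q p1_subset]] by simp

lemma trace_Q_p1_lowerset: "trace Q p1 \<in> lowersets Q"
proof (rule lowersetsI)
  show "trace Q p1 \<subseteq> Q" unfolding trace_Q_p1 by blast
  fix \<sigma> \<tau> assume h: "\<sigma> \<in> Q" "\<tau> \<in> trace Q p1" "Conv \<sigma> \<inter> \<tau> \<noteq> {}"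
  have \<tau>: "\<tau> \<subseteq> p1" using h(2) unfolding trace_Q_p1 by blast
  obtain \<rho> where \<rho>: "\<rho> \<in> P" "\<sigma> \<subseteq> \<rho>" using P_coarser_Q h(1) unfolding coarser_def by blast
  have "\<sigma> \<noteq> {}" using partition_onD3[OF partition_Q] h(1) by blast
  then have "\<rho> = p1" using Conv_disjoint_p1[OF \<rho>(1) _ \<rho>(2)] h(3) \<tau> by blast
  then show "\<sigma> \<in> trace Q p1" unfolding trace_Q_p1 using h(1) \<rho>(2) by blast
qed

lemma is_nc_closure_trace_gap_partition:
  "S \<in> gap_partition \<Longrightarrow> is_nc_closure S (trace Q S) (trace P S)"
  by (rule is_nc_closure_trace[OF closure_Q partition_Q partition_on_gap_partition
        gap_partition_coarser convex_separated_gap_partition])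

text \<open>\<open>\<Union>L \<subseteq> p1\<close> because the trace of \<open>P\<close> on \<open>\<Union>L\<close> is a noncrossing coarsening of \<open>L\<close>;
  \<open>p1 \<subseteq> \<Union>L\<close> because the meet of \<open>P\<close> with the partition into \<open>\<Union>L\<close> and its gaps is a
  noncrossing coarsening of \<open>Q\<close>.\<close>

lemma lowerset_Union_eq_p1:
  assumes L: "L \<in> lowersets Q" and one: "1 \<in> \<Union>L" and cl: "is_nc_closure (\<Union>L) L {\<Union>L}"
  shows "\<Union>L = p1"
proof -
  define X where "X = \<Union>L"
  have LQ: "L \<subseteq> Q" using lowersets_subset[OF L] .
  have X: "X \<subseteq> {1..n}" unfolding X_def using LQ partition_on_block_subset[OF partition_Q] by blast
  have "X \<subseteq> p1"
  proof -
    have "coarser (trace P X) L"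
      using coarser_trace[OF P_coarser_Q, of X] trace_Union_subset[OF partition_Q LQ] X_def by simp
    then have "coarser (trace P X) {X}"
      using cl partition_on_trace[OF partition_P X] noncrossing_trace[OF noncrossing_P]
      unfolding is_nc_closure_def X_def by blast
    then obtain B where B: "B \<in> P" "X \<subseteq> B" unfolding coarser_def by (blast elim: traceE)
    then have "B = p1" using partition_same_block[OF partition_P B(1) p1_in_P] one one_in_p1 X_def by blast
    then show ?thesis using B by simp
  qed
  moreover have "p1 \<subseteq> X"
  proof -
    define T where "T = insert X (set (gaps n X))"
    have T: "partition_on {1..n} T" "noncrossing T" "coarser T Q"
      unfolding T_def X_def
      using partition_on_insert_gaps noncrossing_insert_gaps coarser_insert_gaps_lowerset[OF partition_Q L]
        X one unfolding X_def by blast+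
    have "coarser (meet P T) P"
      using closure_Q partition_on_meet[OF partition_P T(1)] noncrossing_meet[OF noncrossing_P T(2)]
        coarser_meet[OF P_coarser_Q T(3) partition_onD3[OF partition_Q]]
      unfolding is_nc_closure_def by blast
    then obtain B C where BC: "B \<in> P" "C \<in> T" "p1 \<subseteq> B \<inter> C"
      using p1_in_P unfolding coarser_def meet_def by blast
    have "C = X"
      using BC gapsD(3)[OF X] one one_in_p1 unfolding T_def X_def by blast
    then show ?thesis using BC by blast
  qed
  ultimately show ?thesis unfolding X_def by blast
qed

end

section \<open>Cuts and the half-shuffle product\<close>

lemma mem_listset_iff: "xs \<in> listset As \<longleftrightarrow> length xs = length As \<and> (\<forall>i<length As. xs ! i \<in> As ! i)"
proof (induction As arbitrary: xs)
  case Nil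
  then show ?case by auto
next
  case (Cons A As)
  show ?case
  proof (cases xs)
    case Nil
    then show ?thesis by (simp add: set_Cons_def)
  next
    case (Cons y ys)
    have "xs \<in> listset (A # As) \<longleftrightarrow> y \<in> A \<and> ys \<in> listset As" using Cons by (auto simp: set_Cons_def)
    also have "\<dots> \<longleftrightarrow> y \<in> A \<and> length ys = length As \<and> (\<forall>i<length As. ys ! i \<in> As ! i)" using Cons.IH by simp
    also have "\<dots> \<longleftrightarrow> length xs = length (A # As) \<and> (\<forall>i<length (A # As). xs ! i \<in> (A # As) ! i)"
      using Cons by (auto simp: All_less_Suc2)
    finally show ?thesis .
  qed
qed

lemma set_Cons_eq_image: "set_Cons A XS = (\<lambda>(x, xs). x # xs) ` (A \<times> XS)"
  unfolding set_Cons_def by auto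

lemma finite_listset: "(\<And>A. A \<in> set As \<Longrightarrow> finite A) \<Longrightarrow> finite (listset As)"
proof (induction As)
  case Nil
  then show ?case by simp
next
  case (Cons A As)
  then have "finite (A \<times> listset As)" by simp
  then show ?case by (simp add: set_Cons_eq_image)
qed

lemma sum_set_Cons:
  assumes "finite A" "finite XS"
  shows "sum f (set_Cons A XS) = (\<Sum>x\<in>A. \<Sum>xs\<in>XS. f (x # xs))"
proof -
  have inj: "inj_on (\<lambda>(x, xs). x # xs) (A \<times> XS)" by (auto simp: inj_on_def)
  have "sum f (set_Cons A XS) = sum (f \<circ> (\<lambda>(x, xs). x # xs)) (A \<times> XS)"
    unfolding set_Cons_eq_image by (rule sum.reindex[OF inj])
  also have "\<dots> = (\<Sum>x\<in>A. \<Sum>xs\<in>XS. f (x # xs))"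
    unfolding sum.cartesian_product by (rule sum.cong) auto
  finally show ?thesis .
qed

lemma sum_listset_append:
  assumes "\<And>A. A \<in> set As \<Longrightarrow> finite A" "\<And>B. B \<in> set Bs \<Longrightarrow> finite B"
  shows "sum f (listset (As @ Bs)) = (\<Sum>x\<in>listset As. \<Sum>y\<in>listset Bs. f (x @ y))"
  using assms(1)
proof (induction As arbitrary: f)
  case Nil
  then show ?case by simp
next
  case (Cons A As)
  have fA: "finite A" using Cons.prems by simp
  have fin1: "finite (listset (As @ Bs))" by (rule finite_listset) (use Cons.prems assms(2) in auto)
  have fin2: "finite (listset As)" by (rule finite_listset) (use Cons.prems in auto)
  have "sum f (listset ((A # As) @ Bs)) = (\<Sum>a\<in>A. \<Sum>z\<in>listset (As @ Bs). f (a # z))"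
    using sum_set_Cons[OF fA fin1] by simp
  also have "\<dots> = (\<Sum>a\<in>A. \<Sum>x\<in>listset As. \<Sum>y\<in>listset Bs. f (a # (x @ y)))"
    using Cons.IH[of "\<lambda>z. f (_ # z)"] Cons.prems by simp
  also have "\<dots> = (\<Sum>w\<in>set_Cons A (listset As). \<Sum>y\<in>listset Bs. f (w @ y))"
    using sum_set_Cons[OF fA fin2, of "\<lambda>w. \<Sum>y\<in>listset Bs. f (w @ y)"] by simp
  finally show ?case by simp
qed

lemma cuts1_Cons:
  "cuts1 (NP # rest) = {L # Ls | L Ls. L \<in> lowersets (snd NP) \<and>
     Ls \<in> listset (map (\<lambda>NP. lowersets (snd NP)) rest) \<and> 1 \<in> \<Union>L}"
  unfolding cuts1_def by (auto simp: set_Cons_def)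

lemma finite_lowersets: "finite P \<Longrightarrow> finite (lowersets P)"
proof -
  assume "finite P"
  have "lowersets P \<subseteq> Pow P" unfolding lowersets_def is_lowerset_def by blast
  then show ?thesis using \<open>finite P\<close> finite_subset by blast
qed

lemma finite_cuts1: "is_mpart M \<Longrightarrow> finite (cuts1 M)"
proof -
  assume "is_mpart M"
  have "finite (listset (map (\<lambda>NP. lowersets (snd NP)) M))"
    by (rule finite_listset)
      (use \<open>is_mpart M\<close> finite_elements finite_lowersets in \<open>auto simp: is_mpart_def is_part_def\<close>)
  then show ?thesis unfolding cuts1_def by simp
qed

lemma Lpart_Cons: "Lpart (NP # rest) (L # Ls) = Lpart1 NP L @ Lpart rest Ls"
  unfolding Lpart_def by simp

lemma Ubar_Cons: "Ubar (NP # rest) (L # Ls) = Ubar1 NP L @ Ubar rest Ls"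
  unfolding Ubar_def by simp

lemma Lpart_eq_Nil_iff:
  "length Ls = length rest \<Longrightarrow> Lpart rest Ls = [] \<longleftrightarrow> (\<forall>L\<in>set Ls. L = {})"
proof (induction rest arbitrary: Ls)
  case Nil
  then show ?case by (simp add: Lpart_def)
next
  case (Cons NP rest)
  then obtain L Ls' where "Ls = L # Ls'" "length Ls' = length rest" by (cases Ls) auto
  then show ?case using Cons.IH by (simp add: Lpart_def Lpart1_def)
qed

lemma gaps_empty: "n \<ge> 1 \<Longrightarrow> gaps n {} = [{1..n}]"
proof -
  assume "n \<ge> 1"
  have "{0<..<n + 1} = {1..n}" by auto
  then show ?thesis unfolding gaps_def using \<open>n \<ge> 1\<close> by simp
qed

lemma restr_atLeastAtMost: "is_part NP \<Longrightarrow> restr (snd NP) {1..fst NP} = NP"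
proof -
  assume "is_part NP"
  then have p: "partition_on {1..fst NP} (snd NP)" unfolding is_part_def by blast
  have "trace (snd NP) {1..fst NP} = snd NP" by (rule trace_carrier[OF p])
  moreover have "part_image (rank {1..fst NP}) (snd NP) = snd NP"
    by (rule part_image_cong_id) (use rank_atLeastAtMost partition_onD1[OF p] in blast)
  ultimately show ?thesis unfolding restr_eq_trace by (cases NP) simp
qed

lemma Ubar1_empty: "is_part NP \<Longrightarrow> Ubar1 NP {} = [NP]"
proof -
  assume h: "is_part NP"
  then have "fst NP \<ge> 1" unfolding is_part_def by blast
  then show ?thesis unfolding Ubar1_eq_gaps using gaps_empty restr_atLeastAtMost[OF h] by simp
qed

lemma Ubar_replicate_empty: "is_mpart rest \<Longrightarrow> Ubar rest (replicate (length rest) {}) = rest"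
proof (induction rest)
  case Nil
  then show ?case by (simp add: Ubar_def)
next
  case (Cons NP rest)
  then have "is_part NP" "is_mpart rest" unfolding is_mpart_def by auto
  then show ?case using Cons.IH Ubar1_empty unfolding Ubar_def by simp
qed

lemma empty_in_lowersets: "{} \<in> lowersets P"
  by (rule lowersetsI) auto

lemma replicate_empty_in_listset: "replicate (length rest) {} \<in> listset (map (\<lambda>NP. lowersets (snd NP)) rest)"
  unfolding mem_listset_iff by (simp add: empty_in_lowersets)

lemma kappa_singleton: "kappa c [NP] = (if snd NP = {{1..fst NP}} then kcoef c (fst NP) else 0)"
  unfolding kappa_def by (cases NP) simp

lemma kappa_Cons_Cons: "kappa c (x # y # zs) = 0"
  unfolding kappa_def by (cases x) simp

lemma gamma_singleton: "gamma c [NP] = (if nc (fst NP) (snd NP) = {{1..fst NP}} then cP c (snd NP) else 0)"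
  unfolding gamma_def by (cases NP) simp

lemma gamma_Cons_Cons: "gamma c (x # y # zs) = 0"
  unfolding gamma_def by (cases x) simp

text \<open>A cut whose lowerset is nonempty in a later factor has an L-part with at least two
  factors, so \<open>long\<close> kills it.\<close>

lemma hs_eq_single_cut:
  fixes f g :: "mpart \<Rightarrow> 'a::comm_ring_1"
  assumes M: "is_mpart ((n, P) # rest)"
    and L0: "L0 \<in> lowersets P" "1 \<in> \<Union>L0"
    and long: "\<And>x y zs. f (x # y # zs) = 0"
    and other: "\<And>L. L \<in> lowersets P \<Longrightarrow> 1 \<in> \<Union>L \<Longrightarrow> L \<noteq> L0 \<Longrightarrow> f [restr P (\<Union>L)] = 0"
  shows "hs f g ((n, P) # rest) = f [restr P (\<Union>L0)] * g (map (restr P) (gaps n (\<Union>L0)) @ rest)"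
proof -
  define a where "a = L0 # replicate (length rest) {}"
  define F where "F Ls = f (Lpart ((n, P) # rest) Ls) * g (Ubar ((n, P) # rest) Ls)" for Ls
  have mrest: "is_mpart rest" using M by (simp add: is_mpart_def)
  have lp: "Lpart ((n, P) # rest) (L # Ls) = restr P (\<Union>L) # Lpart rest Ls" if "1 \<in> \<Union>L" for L Ls
    using that by (auto simp: Lpart_Cons Lpart1_def)
  have a: "a \<in> cuts1 ((n, P) # rest)"
    unfolding cuts1_Cons a_def using L0 replicate_empty_in_listset by auto
  have "F x = 0" if x: "x \<in> cuts1 ((n, P) # rest)" "x \<noteq> a" for x
  proof -
    obtain L Ls where LL: "x = L # Ls" "L \<in> lowersets P" "1 \<in> \<Union>L" "length Ls = length rest"
      using x(1) unfolding cuts1_Cons mem_listset_iff by auto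
    show ?thesis
    proof (cases "Lpart rest Ls")
      case Nil
      then have "Ls = replicate (length rest) {}"
        using Lpart_eq_Nil_iff[OF LL(4)] LL(4) by (simp add: replicate_eqI)
      then have "L \<noteq> L0" using x(2) LL(1) a_def by blast
      then show ?thesis using other[OF LL(2,3)] lp[OF LL(3)] Nil LL(1) by (simp add: F_def)
    next
      case (Cons y ys)
      then show ?thesis using lp[OF LL(3)] long LL(1) by (simp add: F_def)
    qed
  qed
  then have "hs f g ((n, P) # rest) = F a"
    unfolding hs_def F_def[symmetric]
    using sum.mono_neutral_right[OF finite_cuts1[OF M], of "{a}" F] a by auto
  also have "\<dots> = f [restr P (\<Union>L0)] * g (map (restr P) (gaps n (\<Union>L0)) @ rest)"
    unfolding F_def a_def lp[OF L0(2)] Ubar_Cons Ubar_replicate_empty[OF mrest] Ubar1_eq_gaps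
    using Lpart_eq_Nil_iff[of "replicate (length rest) {}" rest] by simp
  finally show ?thesis .
qed

section \<open>Fibres of the noncrossing closure and restrictions\<close>

definition nc_fibre :: "part \<Rightarrow> part set" where
  "nc_fibre NP = (\<lambda>Q. (fst NP, Q)) ` {Q. partition_on {1..fst NP} Q \<and> nc (fst NP) Q = snd NP}"

lemma mem_nc_fibre_iff:
  "b \<in> nc_fibre NP \<longleftrightarrow> fst b = fst NP \<and> partition_on {1..fst NP} (snd b) \<and> nc (fst NP) (snd b) = snd NP"
  unfolding nc_fibre_def image_iff by (cases b) simp

lemma ncpre_eq_listset: "ncpre M = listset (map nc_fibre M)"
  unfolding ncpre_def nc_fibre_def by (simp add: split_def)

lemma finite_nc_fibre: "finite (nc_fibre NP)"
proof -
  have "{Q. partition_on {1..fst NP} Q \<and> nc (fst NP) Q = snd NP} \<subseteq> {Q. partition_on {1..fst NP} Q}"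
    by blast
  then show ?thesis
    unfolding nc_fibre_def using finitely_many_partition_on[of "{1..fst NP}"] finite_subset by blast
qed

lemma finite_ncpre: "finite (ncpre M)"
  unfolding ncpre_eq_listset by (rule finite_listset) (auto simp: finite_nc_fibre)

lemma sum_ncpre_Cons: "sum f (ncpre (NP # M)) = (\<Sum>x\<in>nc_fibre NP. \<Sum>y\<in>ncpre M. f (x # y))"
  unfolding ncpre_eq_listset list.map listset.simps
  by (rule sum_set_Cons[OF finite_nc_fibre finite_ncpre[unfolded ncpre_eq_listset]])

lemma sum_ncpre_append: "sum f (ncpre (A @ B)) = (\<Sum>u\<in>ncpre A. \<Sum>r\<in>ncpre B. f (u @ r))"
  unfolding ncpre_eq_listset map_append by (rule sum_listset_append) (auto simp: finite_nc_fibre)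

lemma is_mpart_ncpre:
  assumes "is_mpart M" "M' \<in> ncpre M"
  shows "is_mpart M'"
proof -
  have "length M' = length M" and "\<And>i. i < length M \<Longrightarrow> M' ! i \<in> nc_fibre (M ! i)"
    using assms(2) unfolding ncpre_eq_listset mem_listset_iff by auto
  moreover have "is_part (M ! i)" if "i < length M" for i
    using assms(1) that unfolding is_mpart_def by simp
  ultimately have "is_part (M' ! i)" if "i < length M'" for i
    using that unfolding mem_nc_fibre_iff is_part_def by auto
  then show ?thesis unfolding is_mpart_def by (metis in_set_conv_nth)
qed

lemma sum_nc_fibre_one_block: "(\<Sum>x\<in>nc_fibre (m, {{1..m}}). cP c (snd x)) = kcoef c m"
  unfolding nc_fibre_def kcoef_def by (subst sum.reindex) (auto simp: inj_on_def)

lemma Union_trace_subset: "\<Union>(trace P S) \<subseteq> S"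
  unfolding trace_def by blast

lemma restr_eq_iff_trace_eq:
  assumes "finite S"
  shows "restr Q1 S = restr Q2 S \<longleftrightarrow> trace Q1 S = trace Q2 S"
proof
  have unrank_rank_trace: "part_image (unrank S) (part_image (rank S) (trace Q S)) = trace Q S" for Q
    by (rule part_image_inverse[where S = S]) (use unrank_rank[OF assms] Union_trace_subset in auto)
  assume "restr Q1 S = restr Q2 S"
  then show "trace Q1 S = trace Q2 S" unfolding restr_eq_trace using unrank_rank_trace by (metis prod.inject)
next
  assume "trace Q1 S = trace Q2 S"
  then show "restr Q1 S = restr Q2 S" by (simp add: restr_eq_trace)
qed

lemma is_part_restr:
  assumes "partition_on {1..n} P" "D \<subseteq> {1..n}" "D \<noteq> {}"
  shows "is_part (restr P D)"
proof -
  have fin: "finite D" using assms(2) finite_subset by blast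
  have "partition_on D (trace P D)" by (rule partition_on_trace[OF assms(1,2)])
  then have "partition_on {1..card D} (part_image (rank D) (trace P D))"
    using partition_on_part_image[OF inj_on_rank[OF fin]] rank_image[OF fin] by metis
  moreover have "card D \<ge> 1" using fin assms(3) by (simp add: Suc_leI card_gt_0_iff)
  ultimately show ?thesis unfolding is_part_def restr_eq_trace by simp
qed

lemma noncrossing_restr:
  assumes "noncrossing P" "finite D"
  shows "noncrossing (snd (restr P D))"
  unfolding restr_eq_trace
  using noncrossing_part_image_iff[OF strict_mono_on_rank[OF assms(2)] Union_trace_subset]
    noncrossing_trace[OF assms(1)] by simp

lemma restr_in_nc_fibre:
  assumes "finite D" "partition_on D (trace Q D)" "is_nc_closure D (trace Q D) (trace P D)"
  shows "restr Q D \<in> nc_fibre (restr P D)"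
proof -
  have "partition_on {1..card D} (part_image (rank D) (trace Q D))"
    using partition_on_part_image[OF inj_on_rank[OF assms(1)] assms(2)] rank_image[OF assms(1)] by simp
  moreover have "nc (card D) (part_image (rank D) (trace Q D)) = part_image (rank D) (trace P D)"
    using nc_rank_image_iff[OF assms(1,2) Union_trace_subset] assms(3) by simp
  ultimately show ?thesis unfolding restr_eq_trace mem_nc_fibre_iff by simp
qed

lemma nc_fibre_unrank:
  assumes S: "finite S" and T: "\<Union>T \<subseteq> S" and b: "b \<in> nc_fibre (card S, part_image (rank S) T)"
  defines "G \<equiv> part_image (unrank S) (snd b)"
  shows "partition_on S G" "is_nc_closure S G T" "b = (card S, part_image (rank S) G)"
proof -
  have b': "fst b = card S" "partition_on {1..card S} (snd b)" "nc (card S) (snd b) = part_image (rank S) T"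
    using b unfolding mem_nc_fibre_iff by simp_all
  have inj: "inj_on (unrank S) {1..card S}" using unrank_bij[OF S] bij_betw_def by blast
  show G: "partition_on S G"
    unfolding G_def using partition_on_part_image[OF inj b'(2)] unrank_image[OF S] by simp
  have rank_G: "part_image (rank S) G = snd b"
    unfolding G_def
    by (rule part_image_inverse[where S = "{1..card S}"])
      (use rank_unrank[OF S] partition_onD1[OF b'(2)] in auto)
  show "is_nc_closure S G T" using nc_rank_image_iff[OF S G T] rank_G b'(3) by simp
  show "b = (card S, part_image (rank S) G)" using rank_G b'(1) by (metis prod.collapse)
qed

definition mpart_size :: "mpart \<Rightarrow> nat" where
  "mpart_size M = sum_list (map fst M)"

context first_block
begin

lemma one_le_n: "1 \<le> n"
  using p1_subset one_in_p1 by auto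

lemma gap_partition_block_subset: "S \<in> gap_partition \<Longrightarrow> S \<subseteq> {1..n}"
  using partition_on_block_subset[OF partition_on_gap_partition] .

lemma finite_gap_partition_block: "S \<in> gap_partition \<Longrightarrow> finite S"
  using gap_partition_block_subset finite_subset by blast

lemma restr_P_p1: "restr P p1 = (card p1, {{1..card p1}})"
  unfolding restr_eq_trace trace_P_p1 part_image_rank_singleton[OF finite_p1] ..

lemma hs_kappa_first_block:
  assumes "is_mpart rest"
  shows "hs (kappa c) g ((n, P) # rest) = kcoef c (card p1) * g (map (restr P) (gaps n p1) @ rest)"
proof -
  have M: "is_mpart ((n, P) # rest)"
    using assms partition_P one_le_n by (simp add: is_mpart_def is_part_def)
  have "kappa c [restr P (\<Union>L)] = 0" if L: "L \<in> lowersets P" "1 \<in> \<Union>L" "L \<noteq> {p1}" for L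
  proof -
    have "restr P (\<Union>L) = (card (\<Union>L), part_image (rank (\<Union>L)) L)"
      unfolding restr_eq_trace using trace_Union_subset[OF partition_P lowersets_subset[OF L(1)]] by simp
    then show ?thesis using lowerset_eq_singleton_p1[OF L(1,2)] L(3) by (auto simp: kappa_singleton)
  qed
  then show ?thesis
    using hs_eq_single_cut[OF M singleton_p1_lowerset, of "kappa c" g] one_in_p1 restr_P_p1
    by (simp add: kappa_singleton kappa_Cons_Cons)
qed

lemma is_nc_mpart_gaps_append:
  assumes "is_nc_mpart rest"
  shows "is_nc_mpart (map (restr P) (gaps n p1) @ rest)"
proof -
  have "is_part (restr P D) \<and> noncrossing (snd (restr P D))" if "D \<in> set (gaps n p1)" for D
    using gapsD[OF p1_subset that] is_part_restr[OF partition_P] noncrossing_restr[OF noncrossing_P]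
      finite_subset[of D "{1..n}"] by auto
  then show ?thesis using assms unfolding is_nc_mpart_def is_mpart_def by auto
qed

lemma mpart_size_gaps_less: "mpart_size (map (restr P) (gaps n p1) @ rest) < mpart_size ((n, P) # rest)"
proof -
  have "mpart_size (map (restr P) (gaps n p1)) = sum_list (map card (gaps n p1))"
    unfolding mpart_size_def by (simp add: restr_eq_trace comp_def)
  also have "\<dots> \<le> n - card p1" by (rule sum_card_gaps_le[OF p1_subset])
  also have "\<dots> < n" using one_le_n card_gt_0_iff[of p1] finite_p1 one_in_p1 by auto
  finally show ?thesis unfolding mpart_size_def by simp
qed

lemma phi_first_block:
  fixes \<phi> :: "mpart \<Rightarrow> 'a::comm_ring_1"
  assumes phi_eq: "\<And>M. is_nc_mpart M \<Longrightarrow> \<phi> M = eps M + hs (kappa c) \<phi> M" and rest: "is_nc_mpart rest"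
  shows "\<phi> ((n, P) # rest) = kcoef c (card p1) * \<phi> (map (restr P) (gaps n p1) @ rest)"
proof -
  have "is_nc_mpart ((n, P) # rest)"
    using rest partition_P noncrossing_P one_le_n by (simp add: is_nc_mpart_def is_mpart_def is_part_def)
  then show ?thesis
    using phi_eq hs_kappa_first_block rest by (simp add: eps_def is_nc_mpart_def)
qed

end

context first_block_closure
begin

lemma nc_restr_Q_p1: "nc (card p1) (snd (restr Q p1)) = {{1..card p1}}"
proof -
  have "restr Q p1 \<in> nc_fibre (restr P p1)"
    using restr_in_nc_fibre[OF finite_p1 partition_on_trace[OF partition_Q p1_subset]
        is_nc_closure_trace_gap_partition] unfolding gap_partition_def by simp
  then show ?thesis using restr_P_p1 unfolding mem_nc_fibre_iff by simp
qed

lemma hs_gamma_first_block: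
  assumes "is_mpart rest"
  shows "hs (gamma c) g ((n, Q) # rest) = cP c (snd (restr Q p1)) * g (map (restr Q) (gaps n p1) @ rest)"
proof -
  have M: "is_mpart ((n, Q) # rest)"
    using assms partition_Q one_le_n by (simp add: is_mpart_def is_part_def)
  have "gamma c [restr Q (\<Union>L)] = 0" if L: "L \<in> lowersets Q" "1 \<in> \<Union>L" "L \<noteq> trace Q p1" for L
  proof -
    define X where "X = \<Union>L"
    have LQ: "L \<subseteq> Q" using lowersets_subset[OF L(1)] .
    have X: "X \<subseteq> {1..n}" unfolding X_def using LQ partition_on_block_subset[OF partition_Q] by blast
    have fin: "finite X" using X finite_subset by blast
    have trX: "trace Q X = L" unfolding X_def by (rule trace_Union_subset[OF partition_Q LQ])
    have pL: "partition_on X L" using partition_on_trace[OF partition_Q X] trX by simp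
    have "nc (card X) (part_image (rank X) L) \<noteq> {{1..card X}}"
    proof
      assume "nc (card X) (part_image (rank X) L) = {{1..card X}}"
      then have "is_nc_closure X L {X}"
        using nc_rank_image_iff[OF fin pL, of "{X}"] part_image_rank_singleton[OF fin] by simp
      then have "X = p1" using lowerset_Union_eq_p1[OF L(1,2)] X_def by simp
      then show False using trX L(3) by simp
    qed
    then show ?thesis using trX unfolding X_def restr_eq_trace by (simp add: gamma_singleton)
  qed
  then show ?thesis
    using hs_eq_single_cut[OF M trace_Q_p1_lowerset, of "gamma c" g] one_in_p1 Union_trace_Q_p1
      nc_restr_Q_p1
    by (simp add: gamma_singleton gamma_Cons_Cons)
qed

end

section \<open>Decomposing the fibre over P\<close>

context first_block
begin

definition gap_list :: "nat set list" where
  "gap_list = p1 # gaps n p1"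

lemma set_gap_list: "set gap_list = gap_partition"
  unfolding gap_list_def gap_partition_def by simp

lemma distinct_gap_list: "distinct gap_list"
  unfolding gap_list_def using distinct_gaps[OF p1_subset] not_in_gaps[OF p1_subset] one_in_p1 by auto

lemma glue_along_gap_partition:
  assumes G: "\<And>S. S \<in> gap_partition \<Longrightarrow> partition_on S (G S)"
    and cl: "\<And>S. S \<in> gap_partition \<Longrightarrow> is_nc_closure S (G S) (trace P S)"
  defines "Q \<equiv> \<Union>S\<in>gap_partition. G S"
  shows "partition_on {1..n} Q" "nc n Q = P" "\<And>S. S \<in> gap_partition \<Longrightarrow> trace Q S = G S"
proof -
  note glued = glued_partition[OF partition_on_gap_partition G, folded Q_def]
  show "partition_on {1..n} Q" "\<And>S. S \<in> gap_partition \<Longrightarrow> trace Q S = G S"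
    using glued(1,2) by blast+
  have "is_nc_closure {1..n} Q P"
    using is_nc_closure_glue[OF partition_on_gap_partition gap_partition_coarser glued(3)
        partition_P noncrossing_P glued(1)] cl glued(2) by simp
  then show "nc n Q = P" using nc_eq_iff[OF glued(1)] by blast
qed

lemma map_restr_gap_list_in_ncpre:
  assumes "partition_on {1..n} Q" "nc n Q = P"
  shows "map (restr Q) gap_list \<in> ncpre (map (restr P) gap_list)"
proof -
  interpret first_block_closure n Q P p1
    using assms nc_eq_iff p1_in_P one_in_p1 by unfold_locales auto
  have "restr Q S \<in> nc_fibre (restr P S)" if "S \<in> gap_partition" for S
    using restr_in_nc_fibre[OF finite_gap_partition_block[OF that]
        partition_on_trace[OF partition_Q gap_partition_block_subset[OF that]]
        is_nc_closure_trace_gap_partition[OF that]] .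
  then show ?thesis
    unfolding ncpre_eq_listset mem_listset_iff by (simp add: set_gap_list[symmetric])
qed

lemma map_restr_gap_list_inj:
  assumes Q1: "partition_on {1..n} Q1" "nc n Q1 = P" and Q2: "partition_on {1..n} Q2" "nc n Q2 = P"
    and eq: "map (restr Q1) gap_list = map (restr Q2) gap_list"
  shows "Q1 = Q2"
proof -
  have coarser: "coarser gap_partition Q" if "partition_on {1..n} Q" "nc n Q = P" for Q
    using coarser_trans[OF gap_partition_coarser] nc_eq_iff[OF that(1)] that(2)
    unfolding is_nc_closure_def by blast
  have "trace Q1 S = trace Q2 S" if "S \<in> gap_partition" for S
    using eq that restr_eq_iff_trace_eq[OF finite_gap_partition_block[OF that]]
    unfolding map_eq_conv set_gap_list by blast
  then show ?thesis
    using partition_eq_UN_trace[OF partition_on_gap_partition coarser[OF Q1] Q1(1)]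
      partition_eq_UN_trace[OF partition_on_gap_partition coarser[OF Q2] Q2(1)] by simp
qed

lemma map_restr_gap_list_surj:
  assumes b: "b \<in> ncpre (map (restr P) gap_list)"
  shows "\<exists>Q. partition_on {1..n} Q \<and> nc n Q = P \<and> map (restr Q) gap_list = b"
proof -
  have lb: "length b = length gap_list"
    and bi: "\<And>i. i < length gap_list \<Longrightarrow> b ! i \<in> nc_fibre (restr P (gap_list ! i))"
    using b unfolding ncpre_eq_listset mem_listset_iff by auto
  define G where "G S = part_image (unrank S) (snd (the (map_of (zip gap_list b) S)))" for S
  have Gi: "partition_on S (G S) \<and> is_nc_closure S (G S) (trace P S) \<and>
      b ! i = (card S, part_image (rank S) (G S))" if i: "i < length gap_list" "S = gap_list ! i" for i S
  proof -
    have "S \<in> gap_partition" using i(2) nth_mem[OF i(1)] unfolding set_gap_list by simp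
    then have fin: "finite S" by (rule finite_gap_partition_block)
    have "the (map_of (zip gap_list b) S) = b ! i"
      using map_of_zip_nth[OF lb[symmetric] distinct_gap_list] i lb by simp
    then show ?thesis
      using nc_fibre_unrank[OF fin Union_trace_subset bi[OF i(1), unfolded restr_eq_trace i(2)[symmetric]]]
      unfolding G_def by simp
  qed
  have G: "partition_on S (G S)" "is_nc_closure S (G S) (trace P S)" if "S \<in> gap_partition" for S
    using that Gi unfolding set_gap_list[symmetric] in_set_conv_nth by blast+
  define Q where "Q = (\<Union>S\<in>gap_partition. G S)"
  note Q = glue_along_gap_partition[OF G, folded Q_def]
  have "map (restr Q) gap_list = b"
  proof (rule nth_equalityI)
    fix i assume "i < length (map (restr Q) gap_list)"
    then have i: "i < length gap_list" by simp
    then have "gap_list ! i \<in> gap_partition" using set_gap_list nth_mem by blast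
    then show "map (restr Q) gap_list ! i = b ! i"
      using Gi[OF i refl] Q(3) i by (simp add: restr_eq_trace)
  qed (simp add: lb)
  then show ?thesis using Q(1,2) by blast
qed

lemma bij_betw_map_restr_gap_list:
  "bij_betw (\<lambda>Q. map (restr Q) gap_list) {Q. partition_on {1..n} Q \<and> nc n Q = P}
     (ncpre (map (restr P) gap_list))"
proof (rule bij_betw_imageI)
  show "inj_on (\<lambda>Q. map (restr Q) gap_list) {Q. partition_on {1..n} Q \<and> nc n Q = P}"
    by (rule inj_onI) (use map_restr_gap_list_inj in blast)
  show "(\<lambda>Q. map (restr Q) gap_list) ` {Q. partition_on {1..n} Q \<and> nc n Q = P} =
      ncpre (map (restr P) gap_list)"
    using map_restr_gap_list_in_ncpre map_restr_gap_list_surj by blast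
qed

lemma sum_ncpre_first_block:
  fixes \<psi> :: "mpart \<Rightarrow> 'a::comm_ring_1"
  assumes psi_eq: "\<And>M. is_mpart M \<Longrightarrow> \<psi> M = eps M + hs (gamma c) \<psi> M" and rest: "is_mpart rest"
  shows "(\<Sum>M'\<in>ncpre ((n, P) # rest). \<psi> M') =
    kcoef c (card p1) * (\<Sum>M'\<in>ncpre (map (restr P) (gaps n p1) @ rest). \<psi> M')"
proof -
  let ?SQ = "{Q. partition_on {1..n} Q \<and> nc n Q = P}"
  define F where "F b = cP c (snd (hd b)) * (\<Sum>r\<in>ncpre rest. \<psi> (tl b @ r))" for b
  have psi_Cons: "\<psi> ((n, Q) # r) = cP c (snd (restr Q p1)) * \<psi> (map (restr Q) (gaps n p1) @ r)"
    if Q: "Q \<in> ?SQ" and r: "r \<in> ncpre rest" for Q r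
  proof -
    interpret first_block_closure n Q P p1
      using Q nc_eq_iff p1_in_P one_in_p1 by unfold_locales auto
    have "is_mpart r" by (rule is_mpart_ncpre[OF rest r])
    moreover then have "is_mpart ((n, Q) # r)"
      using partition_Q one_le_n by (simp add: is_mpart_def is_part_def)
    ultimately show ?thesis using psi_eq hs_gamma_first_block by (simp add: eps_def)
  qed
  have "(\<Sum>M'\<in>ncpre ((n, P) # rest). \<psi> M') = (\<Sum>Q\<in>?SQ. \<Sum>r\<in>ncpre rest. \<psi> ((n, Q) # r))"
    unfolding sum_ncpre_Cons nc_fibre_def by (simp add: sum.reindex inj_on_def)
  also have "\<dots> = (\<Sum>Q\<in>?SQ. F (map (restr Q) gap_list))"
    using psi_Cons by (simp add: F_def gap_list_def sum_distrib_left)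
  also have "\<dots> = (\<Sum>b\<in>ncpre (map (restr P) gap_list). F b)"
    by (rule sum.reindex_bij_betw[OF bij_betw_map_restr_gap_list])
  also have "\<dots> = (\<Sum>x\<in>nc_fibre (restr P p1). cP c (snd x)) *
      (\<Sum>u\<in>ncpre (map (restr P) (gaps n p1)). \<Sum>r\<in>ncpre rest. \<psi> (u @ r))"
    unfolding gap_list_def list.map sum_ncpre_Cons F_def by (simp add: sum_product)
  also have "\<dots> = kcoef c (card p1) * (\<Sum>M'\<in>ncpre (map (restr P) (gaps n p1) @ rest). \<psi> M')"
    unfolding restr_P_p1 sum_nc_fibre_one_block sum_ncpre_append ..
  finally show ?thesis .
qed

end

theorem mainTheorem5:
  fixes c :: "nat \<Rightarrow> 'a::field"
    and \<phi> \<psi> :: "mpart \<Rightarrow> 'a"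
  assumes phi_eq: "\<And>M. is_nc_mpart M \<Longrightarrow> \<phi> M = eps M + hs (kappa c) \<phi> M"
    and psi_eq: "\<And>M. is_mpart M \<Longrightarrow> \<psi> M = eps M + hs (gamma c) \<psi> M"
  shows "\<And>M. is_nc_mpart M \<Longrightarrow> \<phi> M = (\<Sum>M'\<in>ncpre M. \<psi> M')"
proof -
  fix M show "is_nc_mpart M \<Longrightarrow> \<phi> M = (\<Sum>M'\<in>ncpre M. \<psi> M')"
  proof (induction "mpart_size M" arbitrary: M rule: less_induct)
    case less
    show ?case
    proof (cases M)
      case Nil
      then show ?thesis using phi_eq[of "[]"] psi_eq[of "[]"]
        by (simp add: is_nc_mpart_def is_mpart_def eps_def hs_def ncpre_def)
    next
      case (Cons NP rest)
      obtain n P where NP: "NP = (n, P)" by fastforce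
      have P: "partition_on {1..n} P" "noncrossing P" "1 \<le> n" and rest: "is_nc_mpart rest"
        using less.prems Cons NP by (auto simp: is_nc_mpart_def is_mpart_def is_part_def)
      obtain p1 where "p1 \<in> P" "1 \<in> p1" using partition_on_obtain_block[OF P(1)] P(3) by auto
      then interpret first_block n P p1 using P by unfold_locales
      have "\<phi> (map (restr P) (gaps n p1) @ rest) = (\<Sum>M'\<in>ncpre (map (restr P) (gaps n p1) @ rest). \<psi> M')"
        using less.hyps mpart_size_gaps_less is_nc_mpart_gaps_append[OF rest] Cons NP by blast
      then show ?thesis
        using phi_first_block[OF phi_eq rest] sum_ncpre_first_block[OF psi_eq] rest Cons NP
        by (simp add: is_nc_mpart_def)
    qed
  qed
qed

end
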